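(* There is an algorithm which, given a one-dimensional Peg Solitaire configuration $w\in\{0,1\}^n$ that can be reduced to a single peg, outputs a sequence of hops reducing $w$ to a single peg, in time $O(n)$.
   Context: One-dimensional Peg Solitaire: a configuration is a finite word $w=c_0\cdots c_{n-1}\in\{0,1\}^*$ describing a row of $n$ consecutive sites ($1$ = peg, $0$ = hole); the board consists exactly of these sites. A hop takes three consecutive sites within the board with pegs on one end site and the middle site and a hole on the other end site, moves the end peg into the hole and removes the middle peg ($110\to001$ or $011\to100$). The computational model is the standard RAM model. *)

theory Defs
  imports Main
begin

text \<open>A configuration is a word over {0,1}, represented as a list of booleans
  (True = peg, False = hole). The board consists exactly of these sites.\<close>

type_synonym config = "bool list"

text \<open>A hop is given by the index i of the leftmost of three consecutive sites
  i, i+1, i+2 and a direction: False means 110 -> 001 (peg at i jumps right over i+1),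
  True means 011 -> 100 (peg at i+2 jumps left over i+1).\<close>

type_synonym hopmove = "nat \<times> bool"

definition apply_hop :: "hopmove \<Rightarrow> config \<Rightarrow> config option" where
  "apply_hop h w = (case h of (i, d) \<Rightarrow>
     if i + 2 < length w then
       (if \<not> d \<and> w ! i \<and> w ! (i+1) \<and> \<not> w ! (i+2)
        then Some (w[i := False, i+1 := False, i+2 := True])
        else if d \<and> \<not> w ! i \<and> w ! (i+1) \<and> w ! (i+2)
        then Some (w[i := True, i+1 := False, i+2 := False])
        else None)
     else None)"

fun apply_hops :: "hopmove list \<Rightarrow> config \<Rightarrow> config option" where
  "apply_hops [] w = Some w"
| "apply_hops (h # hs) w = (case apply_hop h w of None \<Rightarrow> None | Some w' \<Rightarrow> apply_hops hs w')"

definition pegs :: "config \<Rightarrow> nat" where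
  "pegs w = length (filter id w)"

definition hop_step :: "config \<Rightarrow> config \<Rightarrow> bool" where
  "hop_step w w' \<longleftrightarrow> (\<exists>h. apply_hop h w = Some w')"

definition reducible_to_one :: "config \<Rightarrow> bool" where
  "reducible_to_one w \<longleftrightarrow> (\<exists>w'. hop_step\<^sup>*\<^sup>* w w' \<and> pegs w' = 1)"

datatype instr =
    LoadConst nat int
  | AddI nat nat nat
  | SubI nat nat nat
  | LoadI nat nat
  | StoreI nat nat           \<comment> \<open>M[R[a]] := R[r]  (StoreI a r)\<close>
  | Jz nat nat               \<comment> \<open>if R[r] = 0 then goto l  (Jz r l)\<close>
  | Jmp nat
  | Halt

record ram_state =
  pc :: nat
  regs :: "nat \<Rightarrow> int"
  mem :: "int \<Rightarrow> int"

definition halted :: "instr list \<Rightarrow> ram_state \<Rightarrow> bool" where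
  "halted P s \<longleftrightarrow> pc s \<ge> length P \<or> P ! pc s = Halt"

definition exec1 :: "instr list \<Rightarrow> ram_state \<Rightarrow> ram_state" where
  "exec1 P s = (if halted P s then s else
     (case P ! pc s of
        LoadConst r k \<Rightarrow> s\<lparr>pc := Suc (pc s), regs := (regs s)(r := k)\<rparr>
      | AddI r a b \<Rightarrow> s\<lparr>pc := Suc (pc s), regs := (regs s)(r := regs s a + regs s b)\<rparr>
      | SubI r a b \<Rightarrow> s\<lparr>pc := Suc (pc s), regs := (regs s)(r := regs s a - regs s b)\<rparr>
      | LoadI r a \<Rightarrow> s\<lparr>pc := Suc (pc s), regs := (regs s)(r := mem s (regs s a))\<rparr>
      | StoreI a r \<Rightarrow> s\<lparr>pc := Suc (pc s), mem := (mem s)(regs s a := regs s r)\<rparr>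
      | Jz r l \<Rightarrow> s\<lparr>pc := (if regs s r = 0 then l else Suc (pc s))\<rparr>
      | Jmp l \<Rightarrow> s\<lparr>pc := l\<rparr>
      | Halt \<Rightarrow> s))"

definition run :: "instr list \<Rightarrow> nat \<Rightarrow> ram_state \<Rightarrow> ram_state" where
  "run P k = (exec1 P ^^ k)"

text \<open>Input encoding: M[0] = n, M[i+1] = c_i (0 or 1) for i < n, all else 0.\<close>

definition init_state :: "config \<Rightarrow> ram_state" where
  "init_state w = \<lparr>pc = 0, regs = (\<lambda>_. 0),
     mem = (\<lambda>a. if a = 0 then int (length w)
                else if 1 \<le> a \<and> a \<le> int (length w) then (if w ! nat (a - 1) then 1 else 0)
                else 0)\<rparr>"

text \<open>Output encoding: M[0] = m (number of hops); for j < m, M[2j+1] = i_j and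
  M[2j+2] = d_j \<in> {0,1}, describing the hop (i_j, d_j).\<close>

definition output_hops :: "(int \<Rightarrow> int) \<Rightarrow> hopmove list" where
  "output_hops M = map (\<lambda>j. (nat (M (2 * int j + 1)), M (2 * int j + 2) = 1)) [0..<nat (M 0)]"

definition output_wellformed :: "(int \<Rightarrow> int) \<Rightarrow> bool" where
  "output_wellformed M \<longleftrightarrow> M 0 \<ge> 0 \<and>
     (\<forall>j < nat (M 0). M (2 * int j + 1) \<ge> 0 \<and> M (2 * int j + 2) \<in> {0, 1})"

definition solves :: "config \<Rightarrow> (int \<Rightarrow> int) \<Rightarrow> bool" where
  "solves w M \<longleftrightarrow> output_wellformed M \<and>
     (\<exists>w'. apply_hops (output_hops M) w = Some w' \<and> pegs w' = 1)"

end

theory Submission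
  imports Defs
begin

text \<open>Solvable configurations form a regular language. An automaton with 18 states accepts every
  word reducible to one peg: it accepts all one-peg words, and undoing a hop never leaves its
  language, which a simulation between its states certifies. Conversely, reading an accepted word
  from left to right, a greedy solver keeps the processed prefix reduced to a canonical shape
  determined by the current state -- holes followed by a short pattern or a periodic block -- by
  emitting at each symbol at most two cascades of equally spaced hops in one direction. Every hop
  removes a peg, so at most \<open>n\<close> hops are emitted, and a RAM that reads the solver's transitions
  from a table and writes each hop in constant time runs in time \<open>O(n)\<close>.\<close>

section \<open>Hops on words\<close>

abbreviation zeros :: "nat \<Rightarrow> config" where "zeros k \<equiv> replicate k False"
abbreviation ones :: "nat \<Rightarrow> config" where "ones k \<equiv> replicate k True"

lemma pegs_Nil [simp]: "pegs [] = 0"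
  and pegs_Cons [simp]: "pegs (b # w) = (if b then Suc (pegs w) else pegs w)"
  by (simp_all add: pegs_def)

lemma pegs_append [simp]: "pegs (u @ v) = pegs u + pegs v"
  by (simp add: pegs_def)

lemma pegs_zeros [simp]: "pegs (zeros k) = 0"
  by (simp add: pegs_def)

lemma pegs_le_length: "pegs w \<le> length w"
  by (simp add: pegs_def)

lemma apply_hop_at:
  "length x = i \<Longrightarrow> apply_hop (i, d) (x @ a # b # c # y) =
     (if \<not> d \<and> a \<and> b \<and> \<not> c then Some (x @ [False, False, True] @ y)
      else if d \<and> \<not> a \<and> b \<and> c then Some (x @ [True, False, False] @ y)
      else None)"
  by (simp add: apply_hop_def nth_append list_update_append)

lemma apply_hop_right: "length x = i \<Longrightarrow>
    apply_hop (i, False) (x @ [True, True, False] @ y) = Some (x @ [False, False, True] @ y)"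
  by (simp add: apply_hop_at)

lemma apply_hop_left: "length x = i \<Longrightarrow>
    apply_hop (i, True) (x @ [False, True, True] @ y) = Some (x @ [True, False, False] @ y)"
  by (simp add: apply_hop_at)

lemma split_at_three: "i + 2 < length w \<Longrightarrow>
    w = take i w @ [w ! i, w ! (i + 1), w ! (i + 2)] @ drop (i + 3) w"
  by (simp add: Cons_nth_drop_Suc numeral_3_eq_3 numeral_2_eq_2 flip: id_take_nth_drop)

lemma apply_hop_SomeE:
  assumes "apply_hop h w = Some w'"
  obtains x y where "w = x @ [True, True, False] @ y" "w' = x @ [False, False, True] @ y"
    | x y where "w = x @ [False, True, True] @ y" "w' = x @ [True, False, False] @ y"
proof -
  obtain i d where h: "h = (i, d)" by fastforce
  from assms have "i + 2 < length w" by (auto simp: apply_hop_def h split: if_splits)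
  then obtain x a b c y where w: "w = x @ a # b # c # y" and "length x = i"
    by (metis split_at_three append_Cons append_Nil length_take min_absorb2 add_lessD1 less_imp_le)
  with assms that show thesis
    by (auto simp: h apply_hop_at split: if_splits)
qed

lemma apply_hop_pegs: "apply_hop h w = Some w' \<Longrightarrow> Suc (pegs w') = pegs w"
  by (erule apply_hop_SomeE) simp_all

lemma apply_hops_append:
  "apply_hops (xs @ ys) w = (case apply_hops xs w of None \<Rightarrow> None | Some w' \<Rightarrow> apply_hops ys w')"
  by (induction xs arbitrary: w) (auto split: option.splits)

lemma apply_hops_pegs: "apply_hops hs w = Some w' \<Longrightarrow> length hs + pegs w' = pegs w"
proof (induction hs arbitrary: w)
  case (Cons h hs)
  then obtain w1 where "apply_hop h w = Some w1" "apply_hops hs w1 = Some w'"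
    by (auto split: option.splits)
  with Cons.IH apply_hop_pegs show ?case by fastforce
qed simp

section \<open>Solvable words are accepted by a finite automaton\<close>

text \<open>States are \<open>0..17\<close>; \<open>0\<close> is initial and \<open>10\<close> is a dead state. The table lists the
  successors on a hole and on a peg.\<close>

definition dfa_table :: "(nat \<times> nat) list" where
  "dfa_table = [(1,2),(1,3),(4,5),(4,6),(7,8),(3,9),(3,9),(7,10),(11,4),(12,13),(10,10),(10,14),
     (10,15),(8,16),(11,7),(10,11),(12,17),(14,16)]"

definition dfa_next :: "nat \<Rightarrow> bool \<Rightarrow> nat" where
  "dfa_next q b = (if q < 18 then (if b then snd (dfa_table ! q) else fst (dfa_table ! q)) else 10)"

definition dfa_accepting :: "nat \<Rightarrow> bool" where
  "dfa_accepting q \<longleftrightarrow> q \<in> {2, 3, 4, 6, 7}"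

lemma all_less_iff_list_all: "(\<forall>p < n. P p) \<longleftrightarrow> list_all P [0..<n]"
  by (auto simp: list_all_iff)

lemma dfa_next_less: "dfa_next q b < 18"
proof -
  have "\<forall>q < 18. fst (dfa_table ! q) < 18 \<and> snd (dfa_table ! q) < 18"
    unfolding all_less_iff_list_all by (simp add: dfa_table_def upt_rec)
  then show ?thesis by (auto simp: dfa_next_def)
qed

lemma dfa_run_less: "q < 18 \<Longrightarrow> foldl dfa_next q w < 18"
  by (induction w arbitrary: q) (simp_all add: dfa_next_less)

lemma dfa_run_dead: "foldl dfa_next 10 w = 10"
  by (induction w) (auto simp: dfa_next_def dfa_table_def)

text \<open>\<open>dfa_le p q\<close> is a simulation certifying that every word accepted from \<open>p\<close> is accepted
  from \<open>q\<close>; the table was found by computing language inclusions of the automaton.\<close>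

definition dfa_le_table :: "nat list list" where
  "dfa_le_table = [[0,1],[1],[2,3],[3],[4],[5,6],[6],[2,3,4,6,7],[8],[9],[0..<18],[1,4,11],[4,12],
     [13],[0,1,3,8,14],[8,15],[2,3,9,16],[0,1,5,6,13,17]]"

definition dfa_le :: "nat \<Rightarrow> nat \<Rightarrow> bool" where
  "dfa_le p q \<longleftrightarrow> p < 18 \<and> q \<in> set (dfa_le_table ! p)"

lemma dfa_le_step:
  assumes "dfa_le p q"
  shows "dfa_accepting p \<longrightarrow> dfa_accepting q" and "dfa_le (dfa_next p b) (dfa_next q b)"
proof -
  have "\<forall>p < 18. list_all (\<lambda>q. (dfa_accepting p \<longrightarrow> dfa_accepting q)
      \<and> dfa_le (dfa_next p False) (dfa_next q False) \<and> dfa_le (dfa_next p True) (dfa_next q True))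
      (dfa_le_table ! p)"
    unfolding all_less_iff_list_all
    by (simp add: upt_rec dfa_le_table_def dfa_le_def dfa_next_def dfa_table_def dfa_accepting_def)
  with assms show "dfa_accepting p \<longrightarrow> dfa_accepting q" "dfa_le (dfa_next p b) (dfa_next q b)"
    by (cases b; auto simp: dfa_le_def list_all_iff)+
qed

lemma dfa_le_accepts:
  "dfa_le p q \<Longrightarrow> dfa_accepting (foldl dfa_next p w) \<Longrightarrow> dfa_accepting (foldl dfa_next q w)"
  by (induction w arbitrary: p q) (auto dest: dfa_le_step)

text \<open>Replacing the result of a hop by its source never leaves the language.\<close>

lemma dfa_le_hop:
  assumes "p < 18"
  shows "dfa_le (foldl dfa_next p [False, False, True]) (foldl dfa_next p [True, True, False])"
    and "dfa_le (foldl dfa_next p [True, False, False]) (foldl dfa_next p [False, True, True])"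
proof -
  have "\<forall>p < 18. dfa_le (foldl dfa_next p [False, False, True]) (foldl dfa_next p [True, True, False])
     \<and> dfa_le (foldl dfa_next p [True, False, False]) (foldl dfa_next p [False, True, True])"
    unfolding all_less_iff_list_all
    by (simp add: upt_rec dfa_le_table_def dfa_le_def dfa_next_def dfa_table_def)
  with assms show "dfa_le (foldl dfa_next p [False, False, True]) (foldl dfa_next p [True, True, False])"
    "dfa_le (foldl dfa_next p [True, False, False]) (foldl dfa_next p [False, True, True])"
    by blast+
qed

lemma dfa_accepting_hop_backward:
  assumes "hop_step w w'" "dfa_accepting (foldl dfa_next 0 w')"
  shows "dfa_accepting (foldl dfa_next 0 w)"
proof -
  obtain h where "apply_hop h w = Some w'" using assms(1) by (auto simp: hop_step_def)
  then show ?thesis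
  proof (cases rule: apply_hop_SomeE)
    case (1 x y)
    have "foldl dfa_next 0 x < 18" by (simp add: dfa_run_less)
    from dfa_le_accepts[OF dfa_le_hop(1)[OF this]] 1 assms(2) show ?thesis by simp
  next
    case (2 x y)
    have "foldl dfa_next 0 x < 18" by (simp add: dfa_run_less)
    from dfa_le_accepts[OF dfa_le_hop(2)[OF this]] 2 assms(2) show ?thesis by simp
  qed
qed

lemma dfa_run_no_pegs: "pegs w = 0 \<Longrightarrow> p \<in> {2, 3, 4, 7} \<Longrightarrow> foldl dfa_next p w \<in> {2, 3, 4, 7}"
proof (induction w arbitrary: p)
  case (Cons b w)
  then have "\<not> b" "pegs w = 0" by (auto split: if_splits)
  moreover have "dfa_next p False \<in> {2, 3, 4, 7}" using Cons.prems by (auto simp: dfa_next_def dfa_table_def)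
  ultimately show ?case using Cons.IH by simp
qed simp

lemma dfa_run_one_peg: "pegs w = 1 \<Longrightarrow> p \<in> {0, 1} \<Longrightarrow> foldl dfa_next p w \<in> {2, 3, 4, 7}"
proof (induction w arbitrary: p)
  case (Cons b w)
  show ?case
  proof (cases b)
    case True
    then have "pegs w = 0" using Cons.prems by simp
    moreover have "dfa_next p True \<in> {2, 3, 4, 7}" using Cons.prems by (auto simp: dfa_next_def dfa_table_def)
    ultimately show ?thesis using dfa_run_no_pegs True by simp
  next
    case False
    then have "pegs w = 1" using Cons.prems by simp
    moreover have "dfa_next p False \<in> {0, 1}" using Cons.prems by (auto simp: dfa_next_def dfa_table_def)
    ultimately show ?thesis using Cons.IH False by simp
  qed
qed simp

theorem reducible_dfa_accepting: "reducible_to_one w \<Longrightarrow> dfa_accepting (foldl dfa_next 0 w)"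
proof -
  assume "reducible_to_one w"
  then obtain w' where "hop_step\<^sup>*\<^sup>* w w'" "pegs w' = 1" by (auto simp: reducible_to_one_def)
  moreover from \<open>pegs w' = 1\<close> have "dfa_accepting (foldl dfa_next 0 w')"
    using dfa_run_one_peg[of w' 0] by (auto simp: dfa_accepting_def)
  ultimately show ?thesis
    by (induction rule: converse_rtranclp_induct) (auto intro: dfa_accepting_hop_backward)
qed

section \<open>A greedy one-pass solver\<close>

text \<open>Reading symbol \<open>b\<close> (\<open>0\<close> hole, \<open>1\<close> peg, \<open>2\<close> end of input) at position \<open>i\<close> in state \<open>q\<close>,
  where \<open>s\<close> counts the holes before the live part of the processed prefix, the solver moves to
  state \<open>action 0 q b\<close>, resets \<open>s\<close> to \<open>i\<close> if \<open>action 1 q b \<noteq> 0\<close> and then adds \<open>action 2 q b\<close>.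
  Fields \<open>3..7\<close> and \<open>8..9\<close> locate two cascades of hops, the first in direction \<open>action 7 q b\<close>,
  the second to the right. Everything is one integer table so that a RAM can read it by indirect
  addressing.\<close>

definition action :: "nat \<Rightarrow> nat \<Rightarrow> nat \<Rightarrow> int" where
  "action f q b = (if f = 0 then (if b < 2 then int (dfa_next q (b = 1)) else 0)
   else if f = 1 then (if (q,b) \<in> {(0,1),(1,1)} then 1 else 0)
   else if f = 2 then (if (q,b) \<in> {(5,0),(6,0),(8,1),(13,0),(14,1),(15,1),(17,0)} then 2 else 0)
   else if f = 3 then (if (q,b) \<in> {(8,1),(14,1),(15,1),(6,2)} then 1 else 0)
   else if f = 4 then (if (q,b) = (6,2) then -1 else 0)
   else if f = 5 then (if (q,b) = (15,1) then 1 else 0)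
   else if f = 6 then (if (q,b) \<in> {(8,1),(14,1)} then 1 else if (q,b) = (15,1) then -2
                       else if (q,b) = (6,2) then -1 else 0)
   else if f = 7 then (if (q,b) \<in> {(8,1),(14,1),(15,1),(6,2)} then 1 else 0)
   else if f = 8 then (if (q,b) \<in> {(5,0),(6,0),(13,0),(15,1),(17,0)} then 1 else 0)
   else if f = 9 then (if (q,b) \<in> {(8,1),(14,1)} then 2 else if (q,b) = (15,1) then -1 else 0)
   else 0)"

definition cascade :: "int \<Rightarrow> int \<Rightarrow> bool \<Rightarrow> (int \<times> bool) list" where
  "cascade hi lo d = map (\<lambda>k. (hi - 2 * int k, d)) [0..<nat ((hi - lo) div 2 + 1)]"

text \<open>The RAM writes a cascade by stepping \<open>hi\<close> down by \<open>2\<close> until it reaches \<open>lo - 2\<close>, so it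
  terminates exactly on ranges of this form.\<close>

definition cascade_range :: "int \<Rightarrow> int \<Rightarrow> bool" where
  "cascade_range hi lo \<longleftrightarrow> (hi - lo) mod 2 = 0 \<and> hi \<ge> lo - 2"

definition new_start :: "int \<Rightarrow> nat \<Rightarrow> nat \<Rightarrow> int \<Rightarrow> int" where
  "new_start i q b s = (if action 1 q b \<noteq> 0 then i else s)"

definition cascade1_hi :: "int \<Rightarrow> nat \<Rightarrow> nat \<Rightarrow> int \<Rightarrow> int" where
  "cascade1_hi i q b s1 = (if action 3 q b \<noteq> 0 then i else s1) + action 4 q b - 2"

definition cascade1_lo :: "int \<Rightarrow> nat \<Rightarrow> nat \<Rightarrow> int \<Rightarrow> int" where
  "cascade1_lo i q b s1 = (if action 5 q b \<noteq> 0 then i else s1) + action 6 q b"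

definition cascade2_hi :: "int \<Rightarrow> nat \<Rightarrow> nat \<Rightarrow> int \<Rightarrow> int" where
  "cascade2_hi i q b s1 = (if action 8 q b \<noteq> 0 then i else s1) + action 9 q b - 2"

definition greedy_step :: "int \<Rightarrow> nat \<Rightarrow> nat \<times> int \<Rightarrow> nat \<times> int \<times> (int \<times> bool) list" where
  "greedy_step i b qs = (case qs of (q, s) \<Rightarrow> let s1 = new_start i q b s in
     (nat (action 0 q b), s1 + action 2 q b,
      cascade (cascade1_hi i q b s1) (cascade1_lo i q b s1) (action 7 q b \<noteq> 0)
        @ cascade (cascade2_hi i q b s1) s1 False))"

definition step_ranges_ok :: "int \<Rightarrow> nat \<Rightarrow> nat \<Rightarrow> int \<Rightarrow> bool" where
  "step_ranges_ok i q b s \<longleftrightarrow>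
     cascade_range (cascade1_hi i q b (new_start i q b s)) (cascade1_lo i q b (new_start i q b s))
     \<and> cascade_range (cascade2_hi i q b (new_start i q b s)) (new_start i q b s)"

lemmas greedy_step_simps = greedy_step_def new_start_def cascade1_hi_def cascade1_lo_def
  cascade2_hi_def action_def dfa_next_def dfa_table_def step_ranges_ok_def cascade_range_def

definition to_hops :: "(int \<times> bool) list \<Rightarrow> hopmove list" where
  "to_hops hs = map (\<lambda>(x, d). (nat x, d)) hs"

lemma to_hops_simps [simp]:
  "to_hops [] = []" "to_hops (hs @ hs') = to_hops hs @ to_hops hs'"
  "to_hops ((x, d) # hs) = (nat x, d) # to_hops hs"
  by (simp_all add: to_hops_def)

lemma cascade_Cons: "hi \<ge> lo \<Longrightarrow> cascade hi lo d = (hi, d) # cascade (hi - 2) lo d"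
proof -
  assume "hi \<ge> lo"
  then have "nat ((hi - lo) div 2 + 1) = Suc (nat ((hi - 2 - lo) div 2 + 1))" by simp
  then show ?thesis
    unfolding cascade_def by (simp add: upt_conv_Cons map_Suc_upt[symmetric] del: upt_Suc)
qed

lemma cascade_empty [simp]: "hi = lo - 2 \<Longrightarrow> cascade hi lo d = []"
  by (simp add: cascade_def)

lemma cascade_single [simp]: "cascade x x d = [(x, d)]"
  by (simp add: cascade_def)

definition alt10 :: "nat \<Rightarrow> config" where "alt10 m = concat (replicate m [True, False])"
definition alt01 :: "nat \<Rightarrow> config" where "alt01 m = concat (replicate m [False, True])"

lemma alt10_Suc: "alt10 (Suc m) = alt10 m @ [True, False]"
  by (simp add: alt10_def replicate_append_same[symmetric])

lemma alt01_Suc: "alt01 (Suc m) = alt01 m @ [False, True]"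
  by (simp add: alt01_def replicate_append_same[symmetric])

lemma length_alt10 [simp]: "length (alt10 m) = 2 * m"
  by (induction m) (simp_all add: alt10_def)

lemma alt01_snoc_False: "alt01 m @ [False] = False # alt10 m"
  by (induction m) (auto simp: alt01_def alt10_def)

lemma zeros_append_two: "zeros k @ False # False # y = False # False # zeros k @ y"
  by (induction k) auto

lemma ones_append_two: "ones k @ [True, True] = True # True # ones k"
  by (induction k) auto

lemma ones_double_Suc: "ones (2 * Suc j) = ones (2 * j) @ [True, True]"
  by (simp add: ones_append_two)

lemma cascade_sweep_left: "length x = p \<Longrightarrow>
  apply_hops (to_hops (cascade (int p + 2 * int m - 1) (int p + 1) True)) (x @ alt10 m @ [True, True] @ y)
    = Some (x @ [True, True] @ zeros (2 * m) @ y)"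
proof (induction m arbitrary: y)
  case 0 then show ?case by (simp add: alt10_def cascade_def)
next
  case (Suc m)
  have c: "cascade (int p + 2 * int (Suc m) - 1) (int p + 1) True
      = (int p + 2 * int m + 1, True) # cascade (int p + 2 * int m - 1) (int p + 1) True"
    by (subst cascade_Cons) (auto simp: algebra_simps)
  have "apply_hop (Suc (p + 2 * m), True) ((x @ alt10 m @ [True]) @ [False, True, True] @ y)
      = Some (x @ alt10 m @ [True, True] @ [False, False] @ y)"
    using apply_hop_left[of "x @ alt10 m @ [True]"] Suc.prems by simp
  moreover have "nat (int p + 2 * int m + 1) = Suc (p + 2 * m)" by simp
  ultimately have "apply_hops (to_hops (cascade (int p + 2 * int (Suc m) - 1) (int p + 1) True))
        (x @ alt10 (Suc m) @ [True, True] @ y)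
     = apply_hops (to_hops (cascade (int p + 2 * int m - 1) (int p + 1) True))
        (x @ alt10 m @ [True, True] @ [False, False] @ y)"
    unfolding c by (simp add: alt10_Suc)
  also have "\<dots> = Some (x @ [True, True] @ zeros (2 * Suc m) @ y)"
    using Suc by (simp add: zeros_append_two)
  finally show ?case .
qed

lemma cascade_sweep_right: "length x = p \<Longrightarrow>
  apply_hops (to_hops (cascade (int p + 2 * int j - 2) (int p) False)) (x @ ones (2 * j) @ [False] @ y)
    = Some (x @ [False] @ alt01 j @ y)"
proof (induction j arbitrary: y)
  case 0 then show ?case by (simp add: alt01_def cascade_def)
next
  case (Suc j)
  have c: "cascade (int p + 2 * int (Suc j) - 2) (int p) False
      = (int p + 2 * int j, False) # cascade (int p + 2 * int j - 2) (int p) False"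
    by (subst cascade_Cons) (auto simp: algebra_simps)
  have "apply_hop (p + 2 * j, False) ((x @ ones (2 * j)) @ [True, True, False] @ y)
      = Some (x @ ones (2 * j) @ [False] @ [False, True] @ y)"
    using apply_hop_right[of "x @ ones (2 * j)"] Suc.prems by simp
  moreover have "nat (int p + 2 * int j) = p + 2 * j" by simp
  ultimately have "apply_hops (to_hops (cascade (int p + 2 * int (Suc j) - 2) (int p) False))
        (x @ ones (2 * Suc j) @ [False] @ y)
     = apply_hops (to_hops (cascade (int p + 2 * int j - 2) (int p) False))
        (x @ ones (2 * j) @ [False] @ [False, True] @ y)"
    unfolding c ones_double_Suc by simp
  also have "\<dots> = Some (x @ [False] @ alt01 (Suc j) @ y)"
    using Suc by (simp add: alt01_Suc)
  finally show ?case .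
qed

text \<open>The shape to which the solver has reduced a processed prefix of length \<open>i\<close> ending in
  state \<open>q\<close>: \<open>s\<close> holes followed by a pattern determined by \<open>q\<close>.\<close>

definition canonical :: "nat \<Rightarrow> nat \<Rightarrow> nat \<Rightarrow> config \<Rightarrow> bool" where
  "canonical q s i cfg \<longleftrightarrow> (
     if q = 0 then i = 0 \<and> cfg = []
     else if q = 1 then i \<ge> 1 \<and> cfg = zeros i
     else if q = 2 then s = 0 \<and> i = 1 \<and> cfg = [True]
     else if q = 3 then s \<ge> 1 \<and> i = s + 1 \<and> cfg = zeros s @ [True]
     else if q = 4 then i = s + 2 \<and> cfg = zeros s @ [True, False]
     else if q = 5 then s = 0 \<and> i = 2 \<and> cfg = [True, True]
     else if q = 6 then s \<ge> 1 \<and> i = s + 2 \<and> cfg = zeros s @ [True, True]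
     else if q = 7 then i \<ge> s + 3 \<and> cfg = zeros s @ True # zeros (i - s - 1)
     else if q = 8 then i = s + 3 \<and> cfg = zeros s @ [True, False, True]
     else if q = 9 then i = s + 3 \<and> cfg = zeros s @ [True, True, True]
     else if q = 11 then (\<exists>m \<ge> 2. i = s + 2 * m \<and> cfg = zeros s @ alt10 m)
     else if q = 12 then (\<exists>j \<ge> 1. i = s + 2 * j + 2 \<and> cfg = zeros s @ ones (2 * j + 1) @ [False])
     else if q = 13 then i = s + 4 \<and> cfg = zeros s @ ones 4
     else if q = 14 then (\<exists>m \<ge> 2. i = s + 2 * m + 1 \<and> cfg = zeros s @ alt10 m @ [True])
     else if q = 15 then (\<exists>j \<ge> 1. i = s + 2 * j + 3 \<and> cfg = zeros s @ ones (2 * j + 1) @ [False, True])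
     else if q = 16 then (\<exists>j \<ge> 2. i = s + 2 * j + 1 \<and> cfg = zeros s @ ones (2 * j + 1))
     else if q = 17 then (\<exists>j \<ge> 3. i = s + 2 * j \<and> cfg = zeros s @ ones (2 * j))
     else False)"

definition step_sound :: "nat \<Rightarrow> nat \<Rightarrow> nat \<Rightarrow> config \<Rightarrow> bool \<Rightarrow> bool" where
  "step_sound q s i cfg b \<longleftrightarrow> (\<exists>s' hs cfg'.
     greedy_step (int i) (of_bool b) (q, int s) = (dfa_next q b, int s', hs)
     \<and> (\<forall>rest. apply_hops (to_hops hs) (cfg @ b # rest) = Some (cfg' @ rest))
     \<and> canonical (dfa_next q b) s' (Suc i) cfg' \<and> (\<forall>x \<in> set hs. fst x \<ge> 0)
     \<and> step_ranges_ok (int i) q (of_bool b) (int s))"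

lemma step_soundI:
  assumes "greedy_step (int i) (of_bool b) (q, int s) = (dfa_next q b, int s', hs)"
    and "\<And>rest. apply_hops (to_hops hs) (cfg @ b # rest) = Some (cfg' @ rest)"
    and "canonical (dfa_next q b) s' (Suc i) cfg'" and "\<forall>x \<in> set hs. fst x \<ge> 0"
    and "step_ranges_ok (int i) q (of_bool b) (int s)"
  shows "step_sound q s i cfg b"
  using assms unfolding step_sound_def by blast

lemma step_sound_quiet:
  assumes "greedy_step (int i) (of_bool b) (q, int s) = (dfa_next q b, int s', [])"
    and "canonical (dfa_next q b) s' (Suc i) (cfg @ [b])"
    and "step_ranges_ok (int i) q (of_bool b) (int s)"
  shows "step_sound q s i cfg b"
  using assms by (intro step_soundI[of i b q s s' "[]" cfg "cfg @ [b]"]) simp_all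

lemma replicate_numeral: "replicate (numeral k) x = x # replicate (pred_numeral k) x"
  by (simp add: numeral_eq_Suc)

lemma Cons_replicate_diff_Suc: "n < m \<Longrightarrow> x # replicate (m - Suc n) x = replicate (m - n) x"
  by (simp flip: replicate_Suc add: Suc_diff_Suc)

lemma alt10_0: "alt10 0 = []"
  by (simp add: alt10_def)

lemma alt10_numeral: "alt10 (numeral k) = alt10 (pred_numeral k) @ [True, False]"
  by (simp add: numeral_eq_Suc alt10_Suc)

lemma canonical_live: "canonical q s i cfg \<Longrightarrow> q \<in> {0, 1, 2, 3, 4, 5, 6, 7, 8, 9, 11, 12, 13, 14, 15, 16, 17}"
  by (auto simp: canonical_def split: if_splits)

abbreviation emitting :: "(nat \<times> bool) set" where
  "emitting \<equiv> {(5, False), (6, False), (8, True), (13, False), (14, True), (15, True), (17, False)}"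

lemma canonical_snoc:
  assumes "canonical q s i cfg" "dfa_next q b \<noteq> 10" "(q, b) \<notin> emitting"
  shows "canonical (dfa_next q b) (if b \<and> q \<le> 1 then i else s) (Suc i) (cfg @ [b])"
proof (cases "q = 14")
  case True
  with assms obtain m where "m \<ge> 2" "i = s + 2 * m + 1" "cfg = zeros s @ alt10 m @ [True]" "\<not> b"
    by (auto simp: canonical_def dfa_next_def dfa_table_def)
  with True show ?thesis
    by (auto simp: canonical_def dfa_next_def dfa_table_def alt10_Suc intro!: exI[of _ "Suc m"])
next
  case False
  with canonical_live[OF assms(1)]
  have "q \<in> {0, 1, 2, 3, 4, 5, 6, 7, 8, 9, 11, 12, 13, 15, 16, 17}" by auto
  with assms show ?thesis
    apply (cases b; simp only: insert_iff singleton_iff; elim disjE)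
    apply (simp_all add: canonical_def dfa_next_def dfa_table_def replicate_numeral replicate_append_same
       alt10_numeral alt10_0 alt10_Suc Cons_replicate_diff_Suc)
    apply (fastforce simp: replicate_append_same intro: exI[of _ "Suc _"])+
    done
qed

lemma quiet_step_sound:
  assumes "canonical q s i cfg" "dfa_next q b \<noteq> 10" "(q, b) \<notin> emitting"
  shows "step_sound q s i cfg b"
proof (rule step_sound_quiet)
  have q: "q \<in> {0, 1, 2, 3, 4, 5, 6, 7, 8, 9, 11, 12, 13, 14, 15, 16, 17}"
    using canonical_live[OF assms(1)] .
  show "greedy_step (int i) (of_bool b) (q, int s) = (dfa_next q b, int (if b \<and> q \<le> 1 then i else s), [])"
    using q assms(2,3) by (cases b; simp only: insert_iff singleton_iff; elim disjE)
      (simp_all add: greedy_step_simps cascade_def)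
  show "step_ranges_ok (int i) q (of_bool b) (int s)"
    using q assms(2,3) by (cases b; simp only: insert_iff singleton_iff; elim disjE)
      (simp_all add: greedy_step_simps)
  show "canonical (dfa_next q b) (if b \<and> q \<le> 1 then i else s) (Suc i) (cfg @ [b])"
    using canonical_snoc[OF assms] .
qed

lemma step_sound_q5_q6_hole:
  assumes "canonical q s i cfg" "q \<in> {5, 6}"
  shows "step_sound q s i cfg False"
proof (rule step_soundI[where s' = "s + 2" and hs = "[(int s, False)]" and cfg' = "zeros (s + 2) @ [True]"])
  have "i = s + 2" "cfg = zeros s @ [True, True]"
    using assms by (auto simp: canonical_def)
  then show "apply_hops (to_hops [(int s, False)]) (cfg @ False # rest) = Some ((zeros (s + 2) @ [True]) @ rest)"
    for rest using apply_hop_right[of "zeros s" s rest] by (simp add: replicate_app_Cons_same)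
qed (use assms in \<open>auto simp: greedy_step_simps canonical_def\<close>)

lemma step_sound_q8_peg:
  assumes "canonical 8 s i cfg"
  shows "step_sound 8 s i cfg True"
proof (rule step_soundI[where s' = "s + 2" and hs = "[(int s + 1, True), (int s, False)]"
      and cfg' = "zeros (s + 2) @ [True, False]"])
  have c: "i = s + 3" "cfg = zeros s @ [True, False, True]"
    using assms by (auto simp: canonical_def)
  fix rest
  have "apply_hop (s + 1, True) (cfg @ True # rest) = Some (zeros s @ [True, True, False, False] @ rest)"
    using c apply_hop_left[of "zeros s @ [True]" "s + 1" rest] by simp
  moreover have "apply_hop (s, False) (zeros s @ [True, True, False, False] @ rest)
      = Some (zeros s @ [False, False, True, False] @ rest)"
    using apply_hop_right[of "zeros s" s "False # rest"] by simp
  ultimately show "apply_hops (to_hops [(int s + 1, True), (int s, False)]) (cfg @ True # rest)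
      = Some ((zeros (s + 2) @ [True, False]) @ rest)"
    by (simp add: replicate_app_Cons_same nat_add_distrib)
qed (use assms in \<open>auto simp: greedy_step_simps canonical_def cascade_Cons\<close>)

lemma step_sound_q13_hole:
  assumes "canonical 13 s i cfg"
  shows "step_sound 13 s i cfg False"
proof (rule step_soundI[where s' = "s + 2" and hs = "[(int s + 2, False), (int s, False)]"
      and cfg' = "zeros (s + 2) @ [True, False, True]"])
  have c: "i = s + 4" "cfg = zeros s @ ones 4"
    using assms by (auto simp: canonical_def)
  fix rest
  have "apply_hop (s + 2, False) (cfg @ False # rest) = Some (zeros s @ [True, True, False, False, True] @ rest)"
    using c apply_hop_right[of "zeros s @ [True, True]" "s + 2" rest] by (simp add: replicate_numeral)
  moreover have "apply_hop (s, False) (zeros s @ [True, True, False, False, True] @ rest)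
      = Some (zeros s @ [False, False, True, False, True] @ rest)"
    using apply_hop_right[of "zeros s" s "[False, True] @ rest"] by simp
  ultimately show "apply_hops (to_hops [(int s + 2, False), (int s, False)]) (cfg @ False # rest)
      = Some ((zeros (s + 2) @ [True, False, True]) @ rest)"
    by (simp add: replicate_app_Cons_same nat_add_distrib)
qed (use assms in \<open>auto simp: greedy_step_simps canonical_def cascade_Cons\<close>)

lemma step_sound_q14_peg:
  assumes "canonical 14 s i cfg"
  shows "step_sound 14 s i cfg True"
proof -
  from assms obtain m where m: "m \<ge> 2" "i = s + 2 * m + 1" "cfg = zeros s @ alt10 m @ [True]"
    by (auto simp: canonical_def)
  define hs where "hs = cascade (int s + 2 * int m - 1) (int s + 1) True @ [(int s, False)]"
  show ?thesis
  proof (rule step_soundI[where s' = "s + 2" and hs = hs and cfg' = "zeros (s + 2) @ True # zeros (2 * m - 1)"])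
    show "greedy_step (int i) (of_bool True) (14, int s) = (dfa_next 14 True, int (s + 2), hs)"
      using m by (simp add: greedy_step_simps hs_def)
    show "canonical (dfa_next 14 True) (s + 2) (Suc i) (zeros (s + 2) @ True # zeros (2 * m - 1))"
      using m by (simp add: canonical_def dfa_next_def dfa_table_def)
    show "step_ranges_ok (int i) 14 (of_bool True) (int s)"
      using m by (simp add: greedy_step_simps)
    show "\<forall>x \<in> set hs. fst x \<ge> 0"
      unfolding hs_def cascade_def by auto
    fix rest
    have z: "zeros (2 * m) = False # zeros (2 * m - 1)" using m by (cases m) auto
    have "apply_hops (to_hops hs) (cfg @ True # rest)
        = apply_hops (to_hops [(int s, False)]) (zeros s @ [True, True] @ zeros (2 * m) @ rest)"
      using m cascade_sweep_left[of "zeros s" s m rest] by (simp add: hs_def apply_hops_append)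
    also have "\<dots> = Some (zeros s @ [False, False, True] @ zeros (2 * m - 1) @ rest)"
      unfolding z using apply_hop_right[of "zeros s" s "zeros (2 * m - 1) @ rest"] by simp
    finally show "apply_hops (to_hops hs) (cfg @ True # rest) = Some ((zeros (s + 2) @ True # zeros (2 * m - 1)) @ rest)"
      by (simp add: replicate_app_Cons_same)
  qed
qed

lemma step_sound_q15_peg:
  assumes "canonical 15 s i cfg"
  shows "step_sound 15 s i cfg True"
proof -
  from assms obtain j where j: "j \<ge> 1" "i = s + 2 * j + 3" "cfg = zeros s @ ones (2 * j + 1) @ [False, True]"
    by (auto simp: canonical_def)
  define hs where "hs = (int s + 2 * int j + 1, True) # cascade (int s + 2 * int (Suc j) - 2) (int s) False"
  show ?thesis
  proof (rule step_soundI[where s' = "s + 2" and hs = hs and cfg' = "zeros (s + 2) @ alt10 (Suc j)"])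
    show "greedy_step (int i) (of_bool True) (15, int s) = (dfa_next 15 True, int (s + 2), hs)"
      using j by (simp add: greedy_step_simps hs_def)
    show "canonical (dfa_next 15 True) (s + 2) (Suc i) (zeros (s + 2) @ alt10 (Suc j))"
      using j by (auto simp: canonical_def dfa_next_def dfa_table_def intro!: exI[of _ "Suc j"])
    show "step_ranges_ok (int i) 15 (of_bool True) (int s)"
      using j by (simp add: greedy_step_simps)
    show "\<forall>x \<in> set hs. fst x \<ge> 0"
      unfolding hs_def cascade_def by auto
    fix rest
    have "apply_hop (s + 2 * j + 1, True) (cfg @ True # rest)
        = Some (zeros s @ ones (2 * Suc j) @ [False] @ [False] @ rest)"
      using j apply_hop_left[of "zeros s @ ones (2 * j + 1)" "s + 2 * j + 1" rest]
      by (simp add: ones_append_two replicate_append_same)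
    moreover have "nat (int s + 2 * int j + 1) = s + 2 * j + 1" by simp
    ultimately have "apply_hops (to_hops hs) (cfg @ True # rest)
        = apply_hops (to_hops (cascade (int s + 2 * int (Suc j) - 2) (int s) False))
            (zeros s @ ones (2 * Suc j) @ [False] @ [False] @ rest)"
      unfolding hs_def by (simp only: to_hops_simps apply_hops.simps option.case)
    also have "\<dots> = Some (zeros s @ [False] @ alt01 (Suc j) @ [False] @ rest)"
      by (rule cascade_sweep_right) simp
    also have "\<dots> = Some ((zeros (s + 2) @ alt10 (Suc j)) @ rest)"
      using alt01_snoc_False[of "Suc j"] by (simp add: replicate_app_Cons_same)
    finally show "apply_hops (to_hops hs) (cfg @ True # rest) = Some ((zeros (s + 2) @ alt10 (Suc j)) @ rest)" .
  qed
qed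

lemma step_sound_q17_hole:
  assumes "canonical 17 s i cfg"
  shows "step_sound 17 s i cfg False"
proof -
  from assms obtain j where j: "j \<ge> 3" "i = s + 2 * j" "cfg = zeros s @ ones (2 * j)"
    by (auto simp: canonical_def)
  then obtain k where k: "j = Suc k" by (cases j) auto
  define hs where "hs = cascade (int s + 2 * int j - 2) (int s) False"
  show ?thesis
  proof (rule step_soundI[where s' = "s + 2" and hs = hs and cfg' = "zeros (s + 2) @ alt10 k @ [True]"])
    show "greedy_step (int i) (of_bool False) (17, int s) = (dfa_next 17 False, int (s + 2), hs)"
      using j by (simp add: greedy_step_simps hs_def)
    show "canonical (dfa_next 17 False) (s + 2) (Suc i) (zeros (s + 2) @ alt10 k @ [True])"
      using j k by (auto simp: canonical_def dfa_next_def dfa_table_def)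
    show "step_ranges_ok (int i) 17 (of_bool False) (int s)"
      using j by (simp add: greedy_step_simps)
    show "\<forall>x \<in> set hs. fst x \<ge> 0"
      unfolding hs_def cascade_def by auto
    fix rest
    have "apply_hops (to_hops hs) (cfg @ False # rest) = Some (zeros s @ [False] @ alt01 j @ rest)"
      unfolding hs_def using j cascade_sweep_right[of "zeros s" s j rest] by simp
    also have "\<dots> = Some ((zeros (s + 2) @ alt10 k @ [True]) @ rest)"
      using alt01_snoc_False[of k] by (simp add: k alt01_Suc replicate_app_Cons_same)
    finally show "apply_hops (to_hops hs) (cfg @ False # rest) = Some ((zeros (s + 2) @ alt10 k @ [True]) @ rest)" .
  qed
qed

lemma step_sound_all:
  assumes "canonical q s i cfg" "dfa_next q b \<noteq> 10"
  shows "step_sound q s i cfg b"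
proof (cases "(q, b) \<in> emitting")
  case True
  with assms(1) show ?thesis
    using step_sound_q5_q6_hole step_sound_q8_peg step_sound_q13_hole step_sound_q14_peg
      step_sound_q15_peg step_sound_q17_hole by auto
next
  case False
  with assms show ?thesis by (rule quiet_step_sound)
qed

lemma finish_sound:
  assumes "canonical q s i cfg" "dfa_accepting q"
  shows "\<exists>cfg'. apply_hops (to_hops (snd (snd (greedy_step (int i) 2 (q, int s))))) cfg = Some cfg'
     \<and> pegs cfg' = 1 \<and> (\<forall>x \<in> set (snd (snd (greedy_step (int i) 2 (q, int s)))). fst x \<ge> 0)
     \<and> step_ranges_ok (int i) q 2 (int s)"
proof (cases "q = 6")
  case True
  with assms obtain t where c: "s = Suc t" "i = s + 2" "cfg = zeros s @ [True, True]"
    by (cases s) (auto simp: canonical_def)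
  have "snd (snd (greedy_step (int i) 2 (q, int s))) = [(int t, True)]"
    using c True by (simp add: greedy_step_simps)
  moreover have "apply_hops (to_hops [(int t, True)]) cfg = Some (zeros t @ [True, False, False])"
    using c apply_hop_left[of "zeros t" t "[]"] by (simp add: replicate_app_Cons_same)
  moreover have "step_ranges_ok (int i) q 2 (int s)"
    using c True by (simp add: greedy_step_simps)
  ultimately show ?thesis by simp
next
  case False
  then have q: "q \<in> {2, 3, 4, 7}" using assms(2) by (auto simp: dfa_accepting_def)
  then have "snd (snd (greedy_step (int i) 2 (q, int s))) = []" "step_ranges_ok (int i) q 2 (int s)"
    by (auto simp: greedy_step_simps)
  moreover have "pegs cfg = 1" using q assms(1) by (auto simp: canonical_def)
  ultimately show ?thesis by simp
qed

definition run_step :: "int \<Rightarrow> nat \<Rightarrow> nat \<times> int \<times> (int \<times> bool) list \<Rightarrow> nat \<times> int \<times> (int \<times> bool) list" where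
  "run_step i b st = (case st of (q, s, out) \<Rightarrow> case greedy_step i b (q, s) of (q', s', hs) \<Rightarrow> (q', s', out @ hs))"

definition greedy_prefix :: "config \<Rightarrow> nat \<Rightarrow> nat \<times> int \<times> (int \<times> bool) list" where
  "greedy_prefix w k = foldl (\<lambda>st i. run_step (int i) (of_bool (w ! i)) st) (0, 0, []) [0..<k]"

definition greedy_hops :: "config \<Rightarrow> (int \<times> bool) list" where
  "greedy_hops w = snd (snd (run_step (int (length w)) 2 (greedy_prefix w (length w))))"

lemma run_step_Pair: "run_step i b (q, s, out) =
    (fst (greedy_step i b (q, s)), fst (snd (greedy_step i b (q, s))), out @ snd (snd (greedy_step i b (q, s))))"
  by (simp add: run_step_def split: prod.split)

lemma greedy_prefix_0: "greedy_prefix w 0 = (0, 0, [])"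
  by (simp add: greedy_prefix_def)

lemma greedy_prefix_Suc: "greedy_prefix w (Suc k) = run_step (int k) (of_bool (w ! k)) (greedy_prefix w k)"
  by (simp add: greedy_prefix_def)

lemma length_greedy_prefix_mono:
  "length (snd (snd (greedy_prefix w k))) \<le> length (snd (snd (greedy_prefix w (Suc k))))"
  by (cases "greedy_prefix w k") (simp add: greedy_prefix_Suc run_step_Pair)

definition greedy_invariant :: "config \<Rightarrow> nat \<Rightarrow> nat \<times> int \<times> (int \<times> bool) list \<Rightarrow> bool" where
  "greedy_invariant w k st \<longleftrightarrow> (case st of (q, s, out) \<Rightarrow> \<exists>sn cfg. s = int sn \<and> canonical q sn k cfg
      \<and> apply_hops (to_hops out) w = Some (cfg @ drop k w)
      \<and> q = foldl dfa_next 0 (take k w) \<and> (\<forall>x \<in> set out. fst x \<ge> 0))"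

lemma greedy_invariant_step:
  assumes "greedy_invariant w k (q, s, out)" "k < length w" "dfa_accepting (foldl dfa_next 0 w)"
  shows "greedy_invariant w (Suc k) (run_step (int k) (of_bool (w ! k)) (q, s, out))"
    and "step_ranges_ok (int k) q (of_bool (w ! k)) s"
proof -
  from assms(1) obtain sn cfg where s: "s = int sn" and c: "canonical q sn k cfg"
    and out: "apply_hops (to_hops out) w = Some (cfg @ drop k w)" and q: "q = foldl dfa_next 0 (take k w)"
    and nn: "\<forall>x \<in> set out. fst x \<ge> 0"
    by (auto simp: greedy_invariant_def)
  have drop: "drop k w = w ! k # drop (Suc k) w" using assms(2) by (simp add: Cons_nth_drop_Suc)
  have take: "take (Suc k) w = take k w @ [w ! k]" using assms(2) by (simp add: take_Suc_conv_app_nth)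
  have "foldl dfa_next 0 w = foldl dfa_next (dfa_next q (w ! k)) (drop (Suc k) w)"
    using q by (metis append_take_drop_id drop foldl_Cons foldl_append)
  then have "dfa_next q (w ! k) \<noteq> 10"
    using assms(3) dfa_run_dead[of "drop (Suc k) w"] by (auto simp: dfa_accepting_def)
  from step_sound_all[OF c this] obtain s' hs cfg' where
    g: "greedy_step (int k) (of_bool (w ! k)) (q, int sn) = (dfa_next q (w ! k), int s', hs)"
    and hops: "\<And>rest. apply_hops (to_hops hs) (cfg @ w ! k # rest) = Some (cfg' @ rest)"
    and c': "canonical (dfa_next q (w ! k)) s' (Suc k) cfg'" and nn': "\<forall>x \<in> set hs. fst x \<ge> 0"
    and ok: "step_ranges_ok (int k) q (of_bool (w ! k)) (int sn)"
    unfolding step_sound_def by blast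
  have "apply_hops (to_hops (out @ hs)) w = Some (cfg' @ drop (Suc k) w)"
    using out hops by (simp add: apply_hops_append drop)
  moreover have "run_step (int k) (of_bool (w ! k)) (q, s, out) = (dfa_next q (w ! k), int s', out @ hs)"
    by (simp add: run_step_def s g)
  ultimately show "greedy_invariant w (Suc k) (run_step (int k) (of_bool (w ! k)) (q, s, out))"
    using c' nn nn' by (auto simp: greedy_invariant_def q take)
  show "step_ranges_ok (int k) q (of_bool (w ! k)) s"
    using ok s by simp
qed

lemma greedy_invariant_prefix:
  "dfa_accepting (foldl dfa_next 0 w) \<Longrightarrow> k \<le> length w \<Longrightarrow> greedy_invariant w k (greedy_prefix w k)"
proof (induction k)
  case 0 then show ?case by (simp add: greedy_invariant_def greedy_prefix_0 canonical_def)
next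
  case (Suc k)
  then show ?case
    using greedy_invariant_step(1)[of w k] by (cases "greedy_prefix w k") (simp add: greedy_prefix_Suc)
qed

lemma greedy_prefix_ranges_ok:
  assumes "dfa_accepting (foldl dfa_next 0 w)" "k < length w"
  shows "step_ranges_ok (int k) (fst (greedy_prefix w k)) (of_bool (w ! k)) (fst (snd (greedy_prefix w k)))"
  using greedy_invariant_step(2)[of w k] greedy_invariant_prefix[of w k] assms
  by (cases "greedy_prefix w k") simp

lemma greedy_prefix_state_less:
  "dfa_accepting (foldl dfa_next 0 w) \<Longrightarrow> k \<le> length w \<Longrightarrow> fst (greedy_prefix w k) < 18"
  using greedy_invariant_prefix[of w k] dfa_run_less[of 0 "take k w"]
  by (cases "greedy_prefix w k") (auto simp: greedy_invariant_def)

theorem greedy_hops_solve: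
  assumes "dfa_accepting (foldl dfa_next 0 w)"
  shows "\<exists>w'. apply_hops (to_hops (greedy_hops w)) w = Some w' \<and> pegs w' = 1"
    and "\<forall>x \<in> set (greedy_hops w). fst x \<ge> 0"
    and "step_ranges_ok (int (length w)) (fst (greedy_prefix w (length w))) 2
           (fst (snd (greedy_prefix w (length w))))"
proof -
  obtain q s out where st: "greedy_prefix w (length w) = (q, s, out)" by (cases "greedy_prefix w (length w)")
  from greedy_invariant_prefix[OF assms le_refl] obtain sn cfg where s: "s = int sn"
    and c: "canonical q sn (length w) cfg" and out: "apply_hops (to_hops out) w = Some cfg"
    and q: "q = foldl dfa_next 0 w" and nn: "\<forall>x \<in> set out. fst x \<ge> 0"
    by (auto simp: greedy_invariant_def st)
  from finish_sound[OF c] assms q obtain cfg' where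
    f: "apply_hops (to_hops (snd (snd (greedy_step (int (length w)) 2 (q, int sn))))) cfg = Some cfg'"
      "pegs cfg' = 1" "\<forall>x \<in> set (snd (snd (greedy_step (int (length w)) 2 (q, int sn)))). fst x \<ge> 0"
      "step_ranges_ok (int (length w)) q 2 (int sn)"
    by blast
  have hops: "greedy_hops w = out @ snd (snd (greedy_step (int (length w)) 2 (q, int sn)))"
    by (simp add: greedy_hops_def st s run_step_Pair)
  show "\<exists>w'. apply_hops (to_hops (greedy_hops w)) w = Some w' \<and> pegs w' = 1"
    using out f by (auto simp: hops apply_hops_append)
  show "\<forall>x \<in> set (greedy_hops w). fst x \<ge> 0"
    using nn f by (auto simp: hops)
  show "step_ranges_ok (int (length w)) (fst (greedy_prefix w (length w))) 2
      (fst (snd (greedy_prefix w (length w))))"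
    using f s by (simp add: st)
qed

section \<open>A linear-time RAM implementation\<close>

definition exec_instr :: "instr \<Rightarrow> ram_state \<Rightarrow> ram_state" where
  "exec_instr ins s = (case ins of
        LoadConst r k \<Rightarrow> s\<lparr>pc := pc s + 1, regs := (regs s)(r := k)\<rparr>
      | AddI r a b \<Rightarrow> s\<lparr>pc := pc s + 1, regs := (regs s)(r := regs s a + regs s b)\<rparr>
      | SubI r a b \<Rightarrow> s\<lparr>pc := pc s + 1, regs := (regs s)(r := regs s a - regs s b)\<rparr>
      | LoadI r a \<Rightarrow> s\<lparr>pc := pc s + 1, regs := (regs s)(r := mem s (regs s a))\<rparr>
      | StoreI a r \<Rightarrow> s\<lparr>pc := pc s + 1, mem := (mem s)(regs s a := regs s r)\<rparr>
      | Jz r l \<Rightarrow> s\<lparr>pc := (if regs s r = 0 then l else pc s + 1)\<rparr>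
      | Jmp l \<Rightarrow> s\<lparr>pc := l\<rparr>
      | Halt \<Rightarrow> s)"

lemma exec1_exec_instr: "pc s < length P \<Longrightarrow> P ! pc s \<noteq> Halt \<Longrightarrow> exec1 P s = exec_instr (P ! pc s) s"
  by (simp add: exec1_def halted_def exec_instr_def split: instr.splits)

lemma run_0: "run P 0 s = s"
  by (simp add: run_def)

lemma run_1: "run P 1 s = exec1 P s"
  by (simp add: run_def)

lemma run_Suc: "run P (Suc k) s = run P k (exec1 P s)"
  by (simp add: run_def funpow_Suc_right del: funpow.simps)

lemma run_numeral: "run P (numeral k) s = run P (pred_numeral k) (exec1 P s)"
  by (simp only: run_def numeral_eq_Suc funpow_Suc_right comp_def)

lemma run_add: "run P (a + b) s = run P b (run P a s)"
  unfolding run_def add.commute[of a b] funpow_add by simp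

definition store_pair :: "(int \<Rightarrow> int) \<Rightarrow> int \<times> int \<Rightarrow> (int \<Rightarrow> int)" where
  "store_pair m av = m(fst av := snd av)"

lemma store_pair_Pair [simp]: "store_pair m (a, v) = m(a := v)"
  by (simp add: store_pair_def)

lemma foldl_store_pair_unique:
  "(a, v) \<in> set L \<Longrightarrow> (\<forall>v'. (a, v') \<in> set L \<longrightarrow> v' = v) \<Longrightarrow> foldl store_pair m L a = v"
proof (induction L rule: rev_induct)
  case (snoc x L)
  obtain a' v' where x: "x = (a', v')" by fastforce
  show ?case
  proof (cases "a' = a")
    case True
    with x have "(a, v') \<in> set (L @ [x])" by simp
    with snoc.prems(2) have "v' = v" by blast
    with True show ?thesis by (simp add: x)
  next
    case False
    with snoc.prems(1) x have "(a, v) \<in> set L" by auto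
    moreover from snoc.prems(2) have "\<forall>v'. (a, v') \<in> set L \<longrightarrow> v' = v" by auto
    ultimately have "foldl store_pair m L a = v" by (rule snoc.IH)
    with False show ?thesis by (simp add: x)
  qed
qed simp

lemma foldl_store_pair_notin: "a \<notin> fst ` set L \<Longrightarrow> foldl store_pair m L a = m a"
proof (induction L rule: rev_induct)
  case (snoc x L)
  then show ?case by (cases x) simp
qed simp

text \<open>Memory layout: the input \<open>M[1..n]\<close> is first copied to \<open>M[-1001 - i]\<close>, so that the output
  \<open>M[0], M[1], \<dots>\<close> may overwrite it; field \<open>f\<close> of the action for state \<open>q\<close> and symbol \<open>b\<close> is
  stored at \<open>M[-(1 + 64 f + 3 q + b)]\<close>. Registers: \<open>R0 = 0\<close>, \<open>R8 = 1\<close>, \<open>R9 = 2\<close>, \<open>R3 = n\<close>, \<open>R4 = i\<close>,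
  \<open>R5 = q\<close>, \<open>R6 = s\<close>, \<open>R7\<close> the number of hops written, \<open>R10 = b\<close>, \<open>R11 = 3 q + b\<close> and \<open>R14, R15, R16\<close>
  the end points and direction of the cascade being written. Instruction \<open>0\<close> jumps to the code
  storing the action table, which jumps back to \<open>1\<close>; the main loop starts at \<open>12\<close>, the two
  cascades are written by the identical loops at \<open>51\<close> and \<open>75\<close>, and \<open>98\<close> halts.\<close>

definition main_code :: "instr list" where
  "main_code = [Jmp 99,
   LoadConst 8 1,
   LoadConst 9 2,
   LoadI 3 0,
   AddI 18 3 0,
   LoadConst 17 (-1000),
   Jz 18 12,
   LoadI 2 18,
   SubI 13 17 18,
   StoreI 13 2,
   SubI 18 18 8,
   Jmp 6,
   SubI 12 4 3,
   Jz 12 18,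
   LoadConst 17 (-1001),
   SubI 13 17 4,
   LoadI 10 13,
   Jmp 19,
   LoadConst 10 2,
   AddI 11 5 5,
   AddI 11 11 5,
   AddI 11 11 10,
   LoadConst 17 (-65),
   SubI 13 17 11,
   LoadI 12 13,
   Jz 12 27,
   AddI 6 4 0,
   LoadConst 17 (-193),
   SubI 13 17 11,
   LoadI 12 13,
   AddI 14 6 0,
   Jz 12 33,
   AddI 14 4 0,
   LoadConst 17 (-257),
   SubI 13 17 11,
   LoadI 12 13,
   AddI 14 14 12,
   SubI 14 14 9,
   LoadConst 17 (-321),
   SubI 13 17 11,
   LoadI 12 13,
   AddI 15 6 0,
   Jz 12 44,
   AddI 15 4 0,
   LoadConst 17 (-385),
   SubI 13 17 11,
   LoadI 12 13,
   AddI 15 15 12,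
   LoadConst 17 (-449),
   SubI 13 17 11,
   LoadI 16 13,
   SubI 12 14 15,
   AddI 12 12 9,
   Jz 12 62,
   AddI 13 7 7,
   AddI 13 13 8,
   StoreI 13 14,
   AddI 13 13 8,
   StoreI 13 16,
   AddI 7 7 8,
   SubI 14 14 9,
   Jmp 51,
   LoadConst 17 (-513),
   SubI 13 17 11,
   LoadI 12 13,
   AddI 14 6 0,
   Jz 12 68,
   AddI 14 4 0,
   LoadConst 17 (-577),
   SubI 13 17 11,
   LoadI 12 13,
   AddI 14 14 12,
   SubI 14 14 9,
   AddI 15 6 0,
   LoadConst 16 0,
   SubI 12 14 15,
   AddI 12 12 9,
   Jz 12 86,
   AddI 13 7 7,
   AddI 13 13 8,
   StoreI 13 14,
   AddI 13 13 8,
   StoreI 13 16,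
   AddI 7 7 8,
   SubI 14 14 9,
   Jmp 75,
   LoadConst 17 (-129),
   SubI 13 17 11,
   LoadI 12 13,
   AddI 6 6 12,
   LoadConst 17 (-1),
   SubI 13 17 11,
   LoadI 5 13,
   SubI 12 4 3,
   Jz 12 97,
   AddI 4 4 8,
   Jmp 12,
   StoreI 0 7,
   Halt]"

definition table_addr :: "nat \<Rightarrow> nat \<Rightarrow> int" where
  "table_addr f e = - (1 + 64 * int f + int e)"

definition table_entries :: "(int \<times> int) list" where
  "table_entries = [(table_addr f (3 * q + b), action f q b).
     f \<leftarrow> [0..<10], q \<leftarrow> [0..<18], b \<leftarrow> [0..<3], action f q b \<noteq> 0]"

definition store_code :: "(int \<times> int) list \<Rightarrow> instr list" where
  "store_code L = concat (map (\<lambda>(a, v). [LoadConst 1 a, LoadConst 2 v, StoreI 1 2]) L)"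

definition solver :: "instr list" where
  "solver = main_code @ store_code table_entries @ [Jmp 1]"

lemma length_main_code: "length main_code = 99"
  by (simp add: main_code_def)

lemma length_store_code: "length (store_code L) = 3 * length L"
  by (induction L) (auto simp: store_code_def)

lemma length_solver: "length solver = 99 + 3 * length table_entries + 1"
  by (simp add: solver_def length_main_code length_store_code)

lemma solver_nth_main: "k < 99 \<Longrightarrow> solver ! k = main_code ! k"
  by (simp add: solver_def nth_append length_main_code)

lemma solver_nth_store: "k < 3 * length table_entries \<Longrightarrow> solver ! (99 + k) = store_code table_entries ! k"
  by (simp add: solver_def nth_append length_main_code length_store_code)

lemma solver_nth_last: "solver ! (99 + 3 * length table_entries) = Jmp 1"
  by (simp add: solver_def nth_append length_main_code length_store_code)

lemma exec1_solver_main: "pc s < 98 \<Longrightarrow> exec1 solver s = exec_instr (main_code ! pc s) s"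
proof -
  assume "pc s < 98"
  moreover have "\<forall>k < 98. main_code ! k \<noteq> Halt"
    unfolding all_less_iff_list_all by (simp add: main_code_def upt_rec)
  ultimately show ?thesis
    using exec1_exec_instr[of s solver] by (simp add: length_solver solver_nth_main)
qed

lemmas exec_main = exec1_solver_main exec_instr_def main_code_def run_numeral run_0 run_Suc

fun write_hops :: "(int \<Rightarrow> int) \<Rightarrow> nat \<Rightarrow> (int \<times> bool) list \<Rightarrow> (int \<Rightarrow> int)" where
  "write_hops m J [] = m"
| "write_hops m J ((x, d) # hs) = write_hops (m(2 * int J + 1 := x, 2 * int J + 2 := of_bool d)) (Suc J) hs"

lemma write_hops_append: "write_hops m J (xs @ ys) = write_hops (write_hops m J xs) (J + length xs) ys"
proof (induction m J xs rule: write_hops.induct)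
  case (2 m J x d hs)
  then show ?case by (simp only: write_hops.simps append_Cons length_Cons add_Suc_right add_Suc)
qed simp

lemma write_hops_nonpos: "a \<le> 0 \<Longrightarrow> write_hops m J hs a = m a"
  by (induction m J hs rule: write_hops.induct) auto

lemma length_cascade: "hi = lo - 2 + 2 * int c \<Longrightarrow> length (cascade hi lo d) = c"
  by (simp add: cascade_def)

lemma cascade_rangeE:
  assumes "cascade_range hi lo"
  obtains c where "hi = lo - 2 + 2 * int c"
proof
  show "hi = lo - 2 + 2 * int (nat ((hi - lo) div 2 + 1))"
    using assms unfolding cascade_range_def by (simp add: nat_0_le) presburger
qed

lemma emit_loop:
  assumes "ofs \<in> {51, 75}" "pc s = ofs" "regs s 8 = 1" "regs s 9 = 2" "regs s 14 = hi" "regs s 15 = lo"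
    "regs s 16 = of_bool d" "regs s 7 = int J" "hi = lo - 2 + 2 * int c"
  shows "pc (run solver (11 * c + 3) s) = ofs + 11 \<and> regs (run solver (11 * c + 3) s) 7 = int (J + c)
    \<and> mem (run solver (11 * c + 3) s) = write_hops (mem s) J (cascade hi lo d)
    \<and> (\<forall>r. r \<notin> {7, 12, 13, 14} \<longrightarrow> regs (run solver (11 * c + 3) s) r = regs s r)"
  using assms
proof (induction c arbitrary: s J hi)
  case 0
  then show ?case by (auto simp: exec_main)
next
  case (Suc c)
  define s1 where "s1 = run solver 11 s"
  have s1: "pc s1 = ofs" "regs s1 8 = 1" "regs s1 9 = 2" "regs s1 14 = hi - 2" "regs s1 15 = lo"
    "regs s1 16 = of_bool d" "regs s1 7 = int (Suc J)"
    "mem s1 = (mem s)(2 * int J + 1 := hi, 2 * int J + 2 := of_bool d)"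
    "\<forall>r. r \<notin> {7, 12, 13, 14} \<longrightarrow> regs s1 r = regs s r"
    using Suc.prems unfolding s1_def by (auto simp: exec_main)
  have "run solver (11 * Suc c + 3) s = run solver (11 * c + 3) s1"
    unfolding s1_def by (simp flip: run_add)
  moreover have "cascade hi lo d = (hi, d) # cascade (hi - 2) lo d"
    using Suc.prems by (simp add: cascade_Cons)
  ultimately show ?case
    using Suc.IH[OF Suc.prems(1) s1(1-7)] Suc.prems s1 by (simp add: fun_upd_def)
qed

definition action_entry :: "nat \<Rightarrow> nat \<Rightarrow> int" where
  "action_entry f e = action f (e div 3) (e mod 3)"

definition table_loaded :: "(int \<Rightarrow> int) \<Rightarrow> bool" where
  "table_loaded m \<longleftrightarrow> (\<forall>f < 10. \<forall>e < 54. m (-(1 + 64 * int f) - int e) = action_entry f e)"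

lemma table_loadedD: "table_loaded m \<Longrightarrow> f < 10 \<Longrightarrow> e < 54 \<Longrightarrow> m (-(1 + 64 * int f) - int e) = action_entry f e"
  by (simp add: table_loaded_def)

lemmas table_lookups = table_loadedD[of _ 0, simplified] table_loadedD[of _ 1, simplified]
  table_loadedD[of _ 2, simplified] table_loadedD[of _ 3, simplified] table_loadedD[of _ 4, simplified]
  table_loadedD[of _ 5, simplified] table_loadedD[of _ 6, simplified] table_loadedD[of _ 7, simplified]
  table_loadedD[of _ 8, simplified] table_loadedD[of _ 9, simplified]

lemma table_loaded_write_hops: "table_loaded m \<Longrightarrow> table_loaded (write_hops m J hs)"
  unfolding table_loaded_def by (simp add: write_hops_nonpos)

lemma action_entry_eq: "b < 3 \<Longrightarrow> action_entry f (3 * q + b) = action f q b"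
  by (simp add: action_entry_def)

lemma select_entry:
  assumes "pc s = 19" "regs s 5 = int q" "regs s 10 = int b"
  shows "pc (run solver 3 s) = 22 \<and> regs (run solver 3 s) 11 = int (3 * q + b)
    \<and> mem (run solver 3 s) = mem s \<and> (\<forall>r \<in> {0, 3, 4, 5, 6, 7, 8, 9}. regs (run solver 3 s) r = regs s r)"
  using assms by (simp add: exec_main)

lemma setup_first_cascade:
  assumes "pc s = 22" "regs s 0 = 0" "regs s 11 = int e" "e < 54" "table_loaded (mem s)" "regs s 9 = 2"
  defines "t \<equiv> (if action_entry 1 e = 0 then 4 else 5) + (if action_entry 3 e = 0 then 5 else 6) + 5
    + (if action_entry 5 e = 0 then 5 else 6) + 7"
  defines "s1 \<equiv> (if action_entry 1 e \<noteq> 0 then regs s 4 else regs s 6)"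
  shows "pc (run solver t s) = 51 \<and> regs (run solver t s) 6 = s1
    \<and> regs (run solver t s) 14 = (if action_entry 3 e \<noteq> 0 then regs s 4 else s1) + action_entry 4 e - 2
    \<and> regs (run solver t s) 15 = (if action_entry 5 e \<noteq> 0 then regs s 4 else s1) + action_entry 6 e
    \<and> regs (run solver t s) 16 = action_entry 7 e \<and> mem (run solver t s) = mem s
    \<and> (\<forall>r \<in> {0, 3, 4, 5, 7, 8, 9, 11}. regs (run solver t s) r = regs s r)"
  using assms unfolding t_def s1_def
  by (cases "action_entry 1 e = 0"; cases "action_entry 3 e = 0"; cases "action_entry 5 e = 0")
    (simp_all add: exec_main table_lookups)

lemma setup_second_cascade:
  assumes "pc s = 62" "regs s 0 = 0" "regs s 11 = int e" "e < 54" "table_loaded (mem s)" "regs s 9 = 2"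
  defines "t \<equiv> (if action_entry 8 e = 0 then 5 else 6) + 7"
  shows "pc (run solver t s) = 75
    \<and> regs (run solver t s) 14 = (if action_entry 8 e \<noteq> 0 then regs s 4 else regs s 6) + action_entry 9 e - 2
    \<and> regs (run solver t s) 15 = regs s 6 \<and> regs (run solver t s) 16 = 0 \<and> mem (run solver t s) = mem s
    \<and> (\<forall>r \<in> {0, 3, 4, 5, 6, 7, 8, 9, 11}. regs (run solver t s) r = regs s r)"
  using assms unfolding t_def
  by (cases "action_entry 8 e = 0") (simp_all add: exec_main table_lookups)

lemma update_state:
  assumes "pc s = 86" "regs s 0 = 0" "regs s 11 = int e" "e < 54" "table_loaded (mem s)"
  shows "pc (run solver 7 s) = 93 \<and> regs (run solver 7 s) 6 = regs s 6 + action_entry 2 e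
    \<and> regs (run solver 7 s) 5 = action_entry 0 e \<and> mem (run solver 7 s) = mem s
    \<and> (\<forall>r \<in> {0, 3, 4, 7, 8, 9}. regs (run solver 7 s) r = regs s r)"
  using assms by (simp add: exec_main table_lookups)

lemma action_direction: "action 7 q b = of_bool (action 7 q b \<noteq> 0)"
  by (simp add: action_def)

lemma first_cascade_phase:
  assumes a: "pc s = 19" "regs s 0 = 0" "regs s 8 = 1" "regs s 9 = 2" "regs s 5 = int q"
    "regs s 10 = int b" "regs s 4 = i" "regs s 6 = S" "regs s 7 = int J" "q < 18" "b < 3"
    "table_loaded (mem s)"
    and range: "cascade_range (cascade1_hi i q b (new_start i q b S)) (cascade1_lo i q b (new_start i q b S))"
  defines "hs \<equiv> cascade (cascade1_hi i q b (new_start i q b S)) (cascade1_lo i q b (new_start i q b S))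
    (action 7 q b \<noteq> 0)"
  shows "\<exists>t \<le> 35 + 11 * length hs. pc (run solver t s) = 62
    \<and> regs (run solver t s) 6 = new_start i q b S \<and> regs (run solver t s) 11 = int (3 * q + b)
    \<and> regs (run solver t s) 7 = int (J + length hs) \<and> mem (run solver t s) = write_hops (mem s) J hs
    \<and> (\<forall>r \<in> {0, 3, 4, 5, 8, 9}. regs (run solver t s) r = regs s r)"
proof -
  define e where "e = 3 * q + b"
  have e: "e < 54" "\<And>f. action_entry f e = action f q b"
    using a(10,11) by (simp_all add: e_def action_entry_eq)
  obtain c where c: "cascade1_hi i q b (new_start i q b S) = cascade1_lo i q b (new_start i q b S) - 2 + 2 * int c"
    using range by (rule cascade_rangeE)
  define s1 where "s1 = run solver 3 s"
  have S1: "pc s1 = 22" "regs s1 11 = int e" "mem s1 = mem s" "\<forall>r \<in> {0, 3, 4, 5, 6, 7, 8, 9}. regs s1 r = regs s r"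
    using select_entry[of s q b] a unfolding s1_def e_def by auto
  define t2 where "t2 = (if action_entry 1 e = 0 then 4 else 5) + (if action_entry 3 e = 0 then 5 else 6) + 5
    + (if action_entry 5 e = 0 then 5 else 6) + (7::nat)"
  define s2 where "s2 = run solver t2 s1"
  have S2: "pc s2 = 51" "regs s2 6 = new_start i q b S" "regs s2 14 = cascade1_hi i q b (new_start i q b S)"
    "regs s2 15 = cascade1_lo i q b (new_start i q b S)" "regs s2 16 = of_bool (action 7 q b \<noteq> 0)"
    "mem s2 = mem s" "\<forall>r \<in> {0, 3, 4, 5, 7, 8, 9, 11}. regs s2 r = regs s1 r"
    using setup_first_cascade[of s1 e] S1 a e action_direction[of q b] unfolding s2_def t2_def
    by (auto simp: new_start_def cascade1_hi_def cascade1_lo_def)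
  define s3 where "s3 = run solver (11 * c + 3) s2"
  have S3: "pc s3 = 62" "regs s3 7 = int (J + c)" "mem s3 = write_hops (mem s) J hs"
    "\<forall>r. r \<notin> {7, 12, 13, 14} \<longrightarrow> regs s3 r = regs s2 r"
    using emit_loop[of 51 s2] S2 S1 a c unfolding s3_def hs_def by auto
  have "run solver (3 + t2 + (11 * c + 3)) s = s3"
    unfolding s3_def s2_def s1_def by (simp only: run_add)
  moreover have "3 + t2 + (11 * c + 3) \<le> 35 + 11 * length hs" "length hs = c"
    using c by (simp_all add: t2_def hs_def length_cascade)
  ultimately show ?thesis
    using S1 S2 S3 a by (intro exI[of _ "3 + t2 + (11 * c + 3)"]) (auto simp: e_def)
qed

lemma second_cascade_phase:
  assumes a: "pc s = 62" "regs s 0 = 0" "regs s 8 = 1" "regs s 9 = 2" "regs s 11 = int (3 * q + b)"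
    "regs s 4 = i" "regs s 6 = s1" "regs s 7 = int J" "q < 18" "b < 3" "table_loaded (mem s)"
    and range: "cascade_range (cascade2_hi i q b s1) s1"
  defines "hs \<equiv> cascade (cascade2_hi i q b s1) s1 False"
  shows "\<exists>t \<le> 25 + 11 * length hs. pc (run solver t s) = 93
    \<and> regs (run solver t s) 6 = s1 + action 2 q b \<and> regs (run solver t s) 5 = action 0 q b
    \<and> regs (run solver t s) 7 = int (J + length hs) \<and> mem (run solver t s) = write_hops (mem s) J hs
    \<and> (\<forall>r \<in> {0, 3, 4, 8, 9}. regs (run solver t s) r = regs s r)"
proof -
  define e where "e = 3 * q + b"
  have e: "e < 54" "\<And>f. action_entry f e = action f q b"
    using a(9,10) by (simp_all add: e_def action_entry_eq)
  obtain c where c: "cascade2_hi i q b s1 = s1 - 2 + 2 * int c"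
    using range by (rule cascade_rangeE)
  define t1 where "t1 = (if action_entry 8 e = 0 then 5 else 6) + (7::nat)"
  define s2 where "s2 = run solver t1 s"
  have S2: "pc s2 = 75" "regs s2 14 = cascade2_hi i q b s1" "regs s2 15 = s1" "regs s2 16 = 0"
    "mem s2 = mem s" "\<forall>r \<in> {0, 3, 4, 5, 6, 7, 8, 9, 11}. regs s2 r = regs s r"
    using setup_second_cascade[of s e] a e unfolding s2_def t1_def e_def
    by (auto simp: cascade2_hi_def)
  define s3 where "s3 = run solver (11 * c + 3) s2"
  have S3: "pc s3 = 86" "regs s3 7 = int (J + c)" "mem s3 = write_hops (mem s) J hs"
    "\<forall>r. r \<notin> {7, 12, 13, 14} \<longrightarrow> regs s3 r = regs s2 r"
    using emit_loop[of 75 s2 _ _ False] S2 a c unfolding s3_def hs_def by auto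
  define s4 where "s4 = run solver 7 s3"
  have S4: "pc s4 = 93" "regs s4 6 = s1 + action 2 q b" "regs s4 5 = action 0 q b" "mem s4 = mem s3"
    "\<forall>r \<in> {0, 3, 4, 7, 8, 9}. regs s4 r = regs s3 r"
    using update_state[of s3 e] S3 S2 a e table_loaded_write_hops unfolding s4_def e_def by auto
  have "run solver (t1 + (11 * c + 3) + 7) s = s4"
    unfolding s4_def s3_def s2_def by (simp only: run_add)
  moreover have "t1 + (11 * c + 3) + 7 \<le> 25 + 11 * length hs" "length hs = c"
    using c by (simp_all add: t1_def hs_def length_cascade)
  ultimately show ?thesis
    using S2 S3 S4 by (intro exI[of _ "t1 + (11 * c + 3) + 7"]) auto
qed

lemma step_block:
  assumes a: "pc s = 19" "regs s 0 = 0" "regs s 8 = 1" "regs s 9 = 2" "regs s 5 = int q"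
    "regs s 10 = int b" "regs s 4 = i" "regs s 6 = S" "regs s 7 = int J" "q < 18" "b < 3"
    "table_loaded (mem s)" "step_ranges_ok i q b S"
  defines "hs \<equiv> snd (snd (greedy_step i b (q, S)))"
  shows "\<exists>t \<le> 60 + 11 * length hs. pc (run solver t s) = 93 \<and> regs (run solver t s) 5 = action 0 q b
    \<and> regs (run solver t s) 6 = fst (snd (greedy_step i b (q, S)))
    \<and> regs (run solver t s) 7 = int (J + length hs) \<and> mem (run solver t s) = write_hops (mem s) J hs
    \<and> (\<forall>r \<in> {0, 3, 4, 8, 9}. regs (run solver t s) r = regs s r)"
proof -
  define s1 where "s1 = new_start i q b S"
  define hs1 where "hs1 = cascade (cascade1_hi i q b s1) (cascade1_lo i q b s1) (action 7 q b \<noteq> 0)"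
  define hs2 where "hs2 = cascade (cascade2_hi i q b s1) s1 False"
  have hs: "hs = hs1 @ hs2"
    by (simp add: hs_def hs1_def hs2_def s1_def greedy_step_def Let_def)
  have ranges: "cascade_range (cascade1_hi i q b s1) (cascade1_lo i q b s1)" "cascade_range (cascade2_hi i q b s1) s1"
    using a(13) by (simp_all add: step_ranges_ok_def s1_def)
  from first_cascade_phase[OF a(1-12)] ranges obtain t1 where t1: "t1 \<le> 35 + 11 * length hs1"
    "pc (run solver t1 s) = 62" "regs (run solver t1 s) 6 = s1" "regs (run solver t1 s) 11 = int (3 * q + b)"
    "regs (run solver t1 s) 7 = int (J + length hs1)" "mem (run solver t1 s) = write_hops (mem s) J hs1"
    "\<forall>r \<in> {0, 3, 4, 5, 8, 9}. regs (run solver t1 s) r = regs s r"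
    unfolding s1_def hs1_def by blast
  from second_cascade_phase[of "run solver t1 s" q b i s1 "J + length hs1"] t1 a ranges(2)
    table_loaded_write_hops obtain t2 where t2: "t2 \<le> 25 + 11 * length hs2"
    "pc (run solver t2 (run solver t1 s)) = 93" "regs (run solver t2 (run solver t1 s)) 6 = s1 + action 2 q b"
    "regs (run solver t2 (run solver t1 s)) 5 = action 0 q b"
    "regs (run solver t2 (run solver t1 s)) 7 = int (J + length hs1 + length hs2)"
    "mem (run solver t2 (run solver t1 s)) = write_hops (write_hops (mem s) J hs1) (J + length hs1) hs2"
    "\<forall>r \<in> {0, 3, 4, 8, 9}. regs (run solver t2 (run solver t1 s)) r = regs (run solver t1 s) r"
    unfolding hs2_def by auto
  have "fst (snd (greedy_step i b (q, S))) = s1 + action 2 q b"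
    by (simp add: greedy_step_def Let_def s1_def)
  then show ?thesis
    using t1 t2 by (intro exI[of _ "t1 + t2"]) (auto simp: run_add hs write_hops_append)
qed

lemma store_code_Cons: "store_code ((a, v) # L) = [LoadConst 1 a, LoadConst 2 v, StoreI 1 2] @ store_code L"
  by (simp add: store_code_def)

lemma store_code_run:
  assumes "\<And>k. k < 3 * length L \<Longrightarrow> P ! (ofs + k) = store_code L ! k" "ofs + 3 * length L \<le> length P"
    and "pc s = ofs"
  shows "pc (run P (3 * length L) s) = ofs + 3 * length L
    \<and> mem (run P (3 * length L) s) = foldl store_pair (mem s) L
    \<and> (\<forall>r. r \<noteq> 1 \<and> r \<noteq> 2 \<longrightarrow> regs (run P (3 * length L) s) r = regs s r)"
  using assms
proof (induction L arbitrary: ofs s)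
  case (Cons x L)
  obtain a v where x: "x = (a, v)" by fastforce
  have "P ! ofs = LoadConst 1 a" "P ! Suc ofs = LoadConst 2 v" "P ! Suc (Suc ofs) = StoreI 1 2"
    using Cons.prems(1)[of 0] Cons.prems(1)[of 1] Cons.prems(1)[of 2]
    by (simp_all add: x store_code_Cons numeral_2_eq_2)
  moreover have "Suc (Suc ofs) < length P" using Cons.prems(2) by simp
  ultimately have s3: "pc (run P 3 s) = ofs + 3" "mem (run P 3 s) = (mem s)(a := v)"
    "\<forall>r. r \<noteq> 1 \<and> r \<noteq> 2 \<longrightarrow> regs (run P 3 s) r = regs s r"
    using Cons.prems(3) by (simp_all add: run_numeral run_Suc run_0 exec1_exec_instr exec_instr_def)
  have "P ! (ofs + 3 + k) = store_code L ! k" if "k < 3 * length L" for k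
    using Cons.prems(1)[of "3 + k"] that by (simp add: x store_code_Cons add.assoc)
  from Cons.IH[OF this _ s3(1)] Cons.prems(2) s3 show ?case
    by (simp add: x run_add[symmetric] algebra_simps fun_upd_def)
qed (simp add: run_0)

lemma load_table_phase:
  assumes "pc s = 0"
  defines "t \<equiv> 1 + 3 * length table_entries + 1"
  shows "pc (run solver t s) = 1 \<and> mem (run solver t s) = foldl store_pair (mem s) table_entries
    \<and> (\<forall>r. r \<noteq> 1 \<and> r \<noteq> 2 \<longrightarrow> regs (run solver t s) r = regs s r)"
proof -
  let ?L = "3 * length table_entries"
  have "pc (run solver 1 s) = 99" "mem (run solver 1 s) = mem s" "regs (run solver 1 s) = regs s"
    using assms by (simp_all add: exec_main)
  then have s2: "pc (run solver ?L (run solver 1 s)) = 99 + ?L"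
    "mem (run solver ?L (run solver 1 s)) = foldl store_pair (mem s) table_entries"
    "\<forall>r. r \<noteq> 1 \<and> r \<noteq> 2 \<longrightarrow> regs (run solver ?L (run solver 1 s)) r = regs s r"
    using store_code_run[of table_entries solver 99] solver_nth_store length_solver by auto
  have "run solver t s = exec1 solver (run solver ?L (run solver 1 s))"
    unfolding t_def run_add run_1 ..
  then show ?thesis
    using s2 exec1_exec_instr[of "run solver ?L (run solver 1 s)" solver]
    by (simp add: length_solver solver_nth_last exec_instr_def)
qed

lemma table_addr_inj:
  assumes "table_addr f (3 * q + b) = table_addr f' (3 * q' + b')" "b < 3" "b' < 3" "q < 18" "q' < 18"
  shows "f = f' \<and> q = q' \<and> b = b'"
proof -
  have e: "64 * f + (3 * q + b) = 64 * f' + (3 * q' + b')"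
    using assms(1) unfolding table_addr_def by linarith
  have "(64 * f + (3 * q + b)) div 64 = f" "(64 * f' + (3 * q' + b')) div 64 = f'"
    using assms by simp_all
  with e have f: "f = f'" by simp
  with e have "3 * q + b = 3 * q' + b'" by simp
  moreover have "(3 * q + b) div 3 = q" "(3 * q' + b') div 3 = q'" "(3 * q + b) mod 3 = b" "(3 * q' + b') mod 3 = b'"
    using assms by simp_all
  ultimately show ?thesis using f by metis
qed

lemma set_table_entries: "(a, v) \<in> set table_entries \<longleftrightarrow> (\<exists>f q b. f < 10 \<and> q < 18 \<and> b < 3
    \<and> action f q b \<noteq> 0 \<and> a = table_addr f (3 * q + b) \<and> v = action f q b)"
  unfolding table_entries_def by (simp add: Bex_def)

lemma table_loaded_store_entries:
  assumes "\<forall>a < 0. m a = 0"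
  shows "table_loaded (foldl store_pair m table_entries)"
  unfolding table_loaded_def
proof (intro allI impI)
  fix f e :: nat assume f: "f < 10" and e: "e < 54"
  define q where "q = e div 3"
  define b where "b = e mod 3"
  have qb: "q < 18" "b < 3" "e = 3 * q + b" using e by (auto simp: q_def b_def)
  have addr: "-(1 + 64 * int f) - int e = table_addr f (3 * q + b)" using qb by (simp add: table_addr_def)
  have entry: "action_entry f e = action f q b" by (simp add: action_entry_def q_def b_def)
  have unique: "f' = f \<and> q' = q \<and> b' = b"
    if "(table_addr f (3 * q + b), v) \<in> set table_entries" "(table_addr f (3 * q + b), v) = (table_addr f' (3 * q' + b'), v')"
      "f' < 10" "q' < 18" "b' < 3" for v v' f' q' b'
    using table_addr_inj[of f q b f' q' b'] that qb by auto
  show "foldl store_pair m table_entries (-(1 + 64 * int f) - int e) = action_entry f e"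
  proof (cases "action f q b = 0")
    case False
    then have "(table_addr f (3 * q + b), action f q b) \<in> set table_entries"
      using f qb by (auto simp: set_table_entries)
    moreover have "\<forall>v'. (table_addr f (3 * q + b), v') \<in> set table_entries \<longrightarrow> v' = action f q b"
      using table_addr_inj qb by (fastforce simp: set_table_entries)
    ultimately show ?thesis unfolding addr entry by (rule foldl_store_pair_unique)
  next
    case True
    then have "table_addr f (3 * q + b) \<notin> fst ` set table_entries"
      using table_addr_inj qb by (fastforce simp: set_table_entries)
    then show ?thesis
      unfolding addr entry True using assms by (simp add: foldl_store_pair_notin table_addr_def)
  qed
qed

lemma foldl_store_entries_outside: "a \<ge> 0 \<or> a < -630 \<Longrightarrow> foldl store_pair m table_entries a = m a"
  by (rule foldl_store_pair_notin) (auto simp: set_table_entries table_addr_def)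

definition input_copied :: "config \<Rightarrow> (int \<Rightarrow> int) \<Rightarrow> bool" where
  "input_copied w m \<longleftrightarrow> (\<forall>i < length w. m (-1001 - int i) = of_bool (w ! i))"

definition output_written :: "(int \<Rightarrow> int) \<Rightarrow> (int \<times> bool) list \<Rightarrow> bool" where
  "output_written m hs \<longleftrightarrow> (\<forall>j < length hs.
     m (2 * int j + 1) = fst (hs ! j) \<and> m (2 * int j + 2) = of_bool (snd (hs ! j)))"

lemma input_copied_write_hops: "input_copied w m \<Longrightarrow> input_copied w (write_hops m J hs)"
  unfolding input_copied_def by (simp add: write_hops_nonpos)

lemma output_written_write_hops:
  "output_written m out \<Longrightarrow> output_written (write_hops m (length out) hs) (out @ hs)"
proof (induction hs arbitrary: m out)
  case (Cons h hs)
  obtain x d where h: "h = (x, d)" by fastforce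
  define m' where "m' = m(2 * int (length out) + 1 := x, 2 * int (length out) + 2 := of_bool d)"
  have "output_written m' (out @ [h])"
    using Cons.prems unfolding output_written_def m'_def h by (auto simp: nth_append less_Suc_eq)
  from Cons.IH[OF this] show ?case by (simp add: h m'_def fun_upd_def)
qed simp

lemma copy_loop:
  assumes "pc s = 6" "regs s 18 = int a" "regs s 17 = -1000" "regs s 8 = 1"
  shows "pc (run solver (6 * a + 1) s) = 12
    \<and> (\<forall>x. mem (run solver (6 * a + 1) s) x
          = (if -1000 - int a \<le> x \<and> x \<le> -1001 then mem s (-1000 - x) else mem s x))
    \<and> (\<forall>r. r \<notin> {2, 13, 18} \<longrightarrow> regs (run solver (6 * a + 1) s) r = regs s r)"
  using assms
proof (induction a arbitrary: s)
  case 0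
  then show ?case by (simp add: exec_main)
next
  case (Suc a)
  define s1 where "s1 = run solver 6 s"
  have s1: "pc s1 = 6" "regs s1 18 = int a" "regs s1 17 = -1000" "regs s1 8 = 1"
    "mem s1 = (mem s)(-1000 - int (Suc a) := mem s (int (Suc a)))"
    "\<forall>r. r \<notin> {2, 13, 18} \<longrightarrow> regs s1 r = regs s r"
    using Suc.prems unfolding s1_def by (simp_all add: exec_main)
  have "run solver (6 * Suc a + 1) s = run solver (6 * a + 1) s1"
    unfolding s1_def by (simp flip: run_add)
  then show ?case using Suc.IH[OF s1(1-4)] s1(5,6) by auto
qed

definition loop_invariant :: "config \<Rightarrow> nat \<Rightarrow> ram_state \<Rightarrow> bool" where
  "loop_invariant w k s \<longleftrightarrow> pc s = 12 \<and> regs s 0 = 0 \<and> regs s 8 = 1 \<and> regs s 9 = 2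
    \<and> regs s 3 = int (length w) \<and> regs s 4 = int k \<and> regs s 5 = int (fst (greedy_prefix w k))
    \<and> regs s 6 = fst (snd (greedy_prefix w k)) \<and> regs s 7 = int (length (snd (snd (greedy_prefix w k))))
    \<and> table_loaded (mem s) \<and> input_copied w (mem s) \<and> output_written (mem s) (snd (snd (greedy_prefix w k)))"

lemma init_phase:
  "\<exists>t \<le> 8 + 3 * length table_entries + 6 * length w. loop_invariant w 0 (run solver t (init_state w))"
proof -
  define n where "n = length w"
  define t1 where "t1 = 1 + 3 * length table_entries + 1"
  define s1 where "s1 = run solver t1 (init_state w)"
  define m where "m = foldl store_pair (mem (init_state w)) table_entries"
  have S1: "pc s1 = 1" "mem s1 = m" "\<forall>r. r \<noteq> 1 \<and> r \<noteq> 2 \<longrightarrow> regs s1 r = 0"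
    using load_table_phase[of "init_state w"] unfolding s1_def t1_def m_def by (auto simp: init_state_def)
  have m_outside: "m a = mem (init_state w) a" if "a \<ge> 0" for a
    unfolding m_def using that by (simp add: foldl_store_entries_outside)
  define s2 where "s2 = run solver 5 s1"
  have S2: "pc s2 = 6" "mem s2 = m" "regs s2 18 = int n" "regs s2 17 = -1000" "regs s2 8 = 1"
    "regs s2 9 = 2" "regs s2 3 = int n" "\<forall>r \<in> {0, 4, 5, 6, 7}. regs s2 r = 0"
    using S1 m_outside[of 0] unfolding s2_def by (simp_all add: exec_main init_state_def n_def)
  define s3 where "s3 = run solver (6 * n + 1) s2"
  have S3: "pc s3 = 12" "\<forall>x. mem s3 x = (if -1000 - int n \<le> x \<and> x \<le> -1001 then m (-1000 - x) else m x)"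
    "\<forall>r. r \<notin> {2, 13, 18} \<longrightarrow> regs s3 r = regs s2 r"
    using copy_loop[OF S2(1,3,4,5)] S2(2) unfolding s3_def by auto
  have "table_loaded m"
    unfolding m_def by (rule table_loaded_store_entries) (simp add: init_state_def)
  then have "table_loaded (mem s3)" using S3(2) unfolding table_loaded_def by auto
  moreover have "input_copied w (mem s3)"
    using S3(2) m_outside by (simp add: input_copied_def init_state_def n_def)
  ultimately have "loop_invariant w 0 s3"
    using S2 S3 by (simp add: loop_invariant_def greedy_prefix_0 output_written_def n_def)
  moreover have "run solver (t1 + 5 + (6 * n + 1)) (init_state w) = s3"
    unfolding s3_def s2_def s1_def by (simp only: run_add)
  moreover have "t1 + 5 + (6 * n + 1) \<le> 8 + 3 * length table_entries + 6 * length w"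
    by (simp add: t1_def n_def)
  ultimately show ?thesis by blast
qed

lemma read_symbol:
  assumes "pc s = 12" "regs s 3 = int n" "regs s 4 = int k" "k < n"
  shows "pc (run solver 6 s) = 19 \<and> regs (run solver 6 s) 10 = mem s (-1001 - int k)
    \<and> mem (run solver 6 s) = mem s \<and> (\<forall>r \<in> {0, 3, 4, 5, 6, 7, 8, 9}. regs (run solver 6 s) r = regs s r)"
  using assms by (simp add: exec_main)

lemma read_end_marker:
  assumes "pc s = 12" "regs s 3 = int n" "regs s 4 = int n"
  shows "pc (run solver 3 s) = 19 \<and> regs (run solver 3 s) 10 = 2
    \<and> mem (run solver 3 s) = mem s \<and> (\<forall>r \<in> {0, 3, 4, 5, 6, 7, 8, 9}. regs (run solver 3 s) r = regs s r)"
  using assms by (simp add: exec_main)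

lemma advance_position:
  assumes "pc s = 93" "regs s 3 = int n" "regs s 4 = int k" "k < n" "regs s 8 = 1"
  shows "pc (run solver 4 s) = 12 \<and> regs (run solver 4 s) 4 = int (Suc k)
    \<and> mem (run solver 4 s) = mem s \<and> (\<forall>r \<in> {0, 3, 5, 6, 7, 8, 9}. regs (run solver 4 s) r = regs s r)"
  using assms by (simp add: exec_main)

lemma write_hop_count:
  assumes "pc s = 93" "regs s 3 = int n" "regs s 4 = int n" "regs s 0 = 0"
  shows "pc (run solver 3 s) = 98 \<and> mem (run solver 3 s) = (mem s)(0 := regs s 7)"
  using assms by (simp add: exec_main)

lemma action_next_state: "action 0 q b \<ge> 0"
  by (simp add: action_def)

lemma loop_iteration:
  assumes "loop_invariant w k s" "k < length w" "dfa_accepting (foldl dfa_next 0 w)"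
  shows "\<exists>t \<le> 70 + 11 * (length (snd (snd (greedy_prefix w (Suc k)))) - length (snd (snd (greedy_prefix w k)))).
    loop_invariant w (Suc k) (run solver t s)"
proof -
  obtain q S out where st: "greedy_prefix w k = (q, S, out)" by (cases "greedy_prefix w k")
  define b :: nat where "b = of_bool (w ! k)"
  define hs where "hs = snd (snd (greedy_step (int k) b (q, S)))"
  have q: "q < 18" using greedy_prefix_state_less[of w k] assms st by simp
  have ok: "step_ranges_ok (int k) q b S" using greedy_prefix_ranges_ok[OF assms(3,2)] st by (simp add: b_def)
  have I: "pc s = 12" "regs s 0 = 0" "regs s 8 = 1" "regs s 9 = 2" "regs s 3 = int (length w)"
    "regs s 4 = int k" "regs s 5 = int q" "regs s 6 = S" "regs s 7 = int (length out)" "table_loaded (mem s)"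
    "input_copied w (mem s)" "output_written (mem s) out"
    using assms(1) st by (simp_all add: loop_invariant_def)
  define s1 where "s1 = run solver 6 s"
  have S1: "pc s1 = 19" "regs s1 10 = int b" "mem s1 = mem s" "\<forall>r \<in> {0, 3, 4, 5, 6, 7, 8, 9}. regs s1 r = regs s r"
    using read_symbol[OF I(1,5,6) assms(2)] I(11) assms(2) unfolding s1_def input_copied_def b_def by auto
  have "b < 3" by (simp add: b_def)
  with step_block[of s1 q b "int k" S "length out"] S1 I q ok obtain t2 where S2: "t2 \<le> 60 + 11 * length hs"
    "pc (run solver t2 s1) = 93" "regs (run solver t2 s1) 5 = action 0 q b"
    "regs (run solver t2 s1) 6 = fst (snd (greedy_step (int k) b (q, S)))"
    "regs (run solver t2 s1) 7 = int (length out + length hs)"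
    "mem (run solver t2 s1) = write_hops (mem s) (length out) hs"
    "\<forall>r \<in> {0, 3, 4, 8, 9}. regs (run solver t2 s1) r = regs s r"
    unfolding hs_def by (auto simp: b_def)
  define s3 where "s3 = run solver 4 (run solver t2 s1)"
  have S3: "pc s3 = 12" "regs s3 4 = int (Suc k)" "mem s3 = mem (run solver t2 s1)"
    "\<forall>r \<in> {0, 3, 5, 6, 7, 8, 9}. regs s3 r = regs (run solver t2 s1) r"
    using advance_position[of "run solver t2 s1" "length w" k] S2 I assms(2) unfolding s3_def by auto
  have next_prefix: "greedy_prefix w (Suc k) = (nat (action 0 q b), fst (snd (greedy_step (int k) b (q, S))), out @ hs)"
    by (simp add: greedy_prefix_Suc st run_step_Pair hs_def b_def greedy_step_def Let_def)
  have "loop_invariant w (Suc k) s3"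
    unfolding loop_invariant_def next_prefix
    using S3 S2 I action_next_state[of q b] table_loaded_write_hops input_copied_write_hops
      output_written_write_hops[OF I(12)] by auto
  moreover have "run solver (6 + t2 + 4) s = s3"
    unfolding s3_def s1_def by (simp only: run_add)
  moreover have "6 + t2 + 4 \<le> 70 + 11 * (length (snd (snd (greedy_prefix w (Suc k)))) - length (snd (snd (greedy_prefix w k))))"
    using S2(1) next_prefix st by simp
  ultimately show ?thesis by blast
qed

lemma loop_phase:
  assumes "loop_invariant w 0 s" "dfa_accepting (foldl dfa_next 0 w)"
  shows "k \<le> length w \<Longrightarrow> \<exists>t \<le> 70 * k + 11 * length (snd (snd (greedy_prefix w k))).
    loop_invariant w k (run solver t s)"
proof (induction k)
  case 0
  with assms(1) show ?case by (intro exI[of _ 0]) (simp add: run_0)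
next
  case (Suc k)
  then obtain t1 where t1: "t1 \<le> 70 * k + 11 * length (snd (snd (greedy_prefix w k)))"
    "loop_invariant w k (run solver t1 s)"
    by auto
  with loop_iteration[OF t1(2) _ assms(2)] Suc.prems obtain t2 where
    t2: "t2 \<le> 70 + 11 * (length (snd (snd (greedy_prefix w (Suc k)))) - length (snd (snd (greedy_prefix w k))))"
    "loop_invariant w (Suc k) (run solver t2 (run solver t1 s))"
    by auto
  have "t1 + t2 \<le> 70 * Suc k + 11 * length (snd (snd (greedy_prefix w (Suc k))))"
    using t1(1) t2(1) length_greedy_prefix_mono[of w k] by simp
  with t2(2) show ?case by (intro exI[of _ "t1 + t2"]) (simp add: run_add)
qed

lemma finish_phase:
  assumes "loop_invariant w (length w) s" "dfa_accepting (foldl dfa_next 0 w)"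
  shows "\<exists>t \<le> 70 + 11 * (length (greedy_hops w) - length (snd (snd (greedy_prefix w (length w))))).
    pc (run solver t s) = 98 \<and> mem (run solver t s) 0 = int (length (greedy_hops w))
    \<and> output_written (mem (run solver t s)) (greedy_hops w)"
proof -
  define n where "n = length w"
  obtain q S out where st: "greedy_prefix w n = (q, S, out)" by (cases "greedy_prefix w n")
  define hs where "hs = snd (snd (greedy_step (int n) 2 (q, S)))"
  have q: "q < 18" using greedy_prefix_state_less[of w n] assms st n_def by simp
  have ok: "step_ranges_ok (int n) q 2 S" using greedy_hops_solve(3)[OF assms(2)] st n_def by simp
  have I: "pc s = 12" "regs s 0 = 0" "regs s 8 = 1" "regs s 9 = 2" "regs s 3 = int n"
    "regs s 4 = int n" "regs s 5 = int q" "regs s 6 = S" "regs s 7 = int (length out)" "table_loaded (mem s)"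
    "output_written (mem s) out"
    using assms(1) st n_def by (simp_all add: loop_invariant_def)
  define s1 where "s1 = run solver 3 s"
  have S1: "pc s1 = 19" "regs s1 10 = int 2" "mem s1 = mem s" "\<forall>r \<in> {0, 3, 4, 5, 6, 7, 8, 9}. regs s1 r = regs s r"
    using read_end_marker[OF I(1,5,6)] unfolding s1_def by auto
  from step_block[of s1 q 2 "int n" S "length out"] S1 I q ok obtain t2 where S2: "t2 \<le> 60 + 11 * length hs"
    "pc (run solver t2 s1) = 93" "regs (run solver t2 s1) 7 = int (length out + length hs)"
    "mem (run solver t2 s1) = write_hops (mem s) (length out) hs"
    "\<forall>r \<in> {0, 3, 4, 8, 9}. regs (run solver t2 s1) r = regs s r"
    unfolding hs_def by auto
  define s3 where "s3 = run solver 3 (run solver t2 s1)"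
  have S3: "pc s3 = 98" "mem s3 = (mem (run solver t2 s1))(0 := int (length out + length hs))"
    using write_hop_count[of "run solver t2 s1" n] S2 I unfolding s3_def by auto
  have hops: "greedy_hops w = out @ hs"
    by (simp add: greedy_hops_def n_def[symmetric] st hs_def run_step_Pair)
  have "output_written (mem s3) (out @ hs)"
    using output_written_write_hops[OF I(11), of hs] S2(4) S3(2) by (simp add: output_written_def)
  moreover have "run solver (3 + t2 + 3) s = s3"
    unfolding s3_def s1_def by (simp only: run_add)
  moreover have "3 + t2 + 3 \<le> 70 + 11 * (length (greedy_hops w) - length (snd (snd (greedy_prefix w (length w)))))"
    using S2(1) hops st n_def by simp
  ultimately show ?thesis using S3 hops by (intro exI[of _ "3 + t2 + 3"]) simp
qed

lemma length_greedy_prefix_le_hops: "length (snd (snd (greedy_prefix w (length w)))) \<le> length (greedy_hops w)"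
  by (cases "greedy_prefix w (length w)") (simp add: greedy_hops_def run_step_Pair)

lemma length_greedy_hops_le:
  assumes "apply_hops (to_hops (greedy_hops w)) w = Some w'"
  shows "length (greedy_hops w) \<le> length w"
  using apply_hops_pegs[OF assms] pegs_le_length[of w] by (simp add: to_hops_def)

lemma solver_run:
  assumes "dfa_accepting (foldl dfa_next 0 w)"
  shows "\<exists>k \<le> 78 + 3 * length table_entries + 76 * length w + 11 * length (greedy_hops w).
    halted solver (run solver k (init_state w)) \<and> mem (run solver k (init_state w)) 0 = int (length (greedy_hops w))
    \<and> output_written (mem (run solver k (init_state w))) (greedy_hops w)"
proof -
  obtain t1 where t1: "t1 \<le> 8 + 3 * length table_entries + 6 * length w"
    "loop_invariant w 0 (run solver t1 (init_state w))"
    using init_phase by blast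
  obtain t2 where t2: "t2 \<le> 70 * length w + 11 * length (snd (snd (greedy_prefix w (length w))))"
    "loop_invariant w (length w) (run solver t2 (run solver t1 (init_state w)))"
    using loop_phase[OF t1(2) assms le_refl] by blast
  obtain t3 where t3: "t3 \<le> 70 + 11 * (length (greedy_hops w) - length (snd (snd (greedy_prefix w (length w)))))"
    "pc (run solver (t1 + t2 + t3) (init_state w)) = 98"
    "mem (run solver (t1 + t2 + t3) (init_state w)) 0 = int (length (greedy_hops w))"
    "output_written (mem (run solver (t1 + t2 + t3) (init_state w))) (greedy_hops w)"
    using finish_phase[OF t2(2) assms] by (auto simp: run_add)
  have "solver ! 98 = Halt"
    by (simp add: solver_nth_main main_code_def)
  then have "halted solver (run solver (t1 + t2 + t3) (init_state w))"
    using t3(2) by (simp add: halted_def)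
  moreover have "t1 + t2 + t3 \<le> 78 + 3 * length table_entries + 76 * length w + 11 * length (greedy_hops w)"
    using t1(1) t2(1) t3(1) length_greedy_prefix_le_hops[of w] by linarith
  ultimately show ?thesis using t3(3,4) by blast
qed

lemma solves_if_output_written:
  assumes "output_written M hs" "M 0 = int (length hs)" "\<forall>x \<in> set hs. fst x \<ge> 0"
    and "apply_hops (to_hops hs) w = Some w'" "pegs w' = 1"
  shows "solves w M"
proof -
  have "output_wellformed M"
    using assms(1-3) by (auto simp: output_wellformed_def output_written_def)
  moreover have "output_hops M = to_hops hs"
    using assms(1,2) by (auto intro!: nth_equalityI simp: output_hops_def output_written_def to_hops_def case_prod_beta)
  ultimately show ?thesis using assms(4,5) by (auto simp: solves_def)
qed

theorem corollary1:
  shows "\<exists>(P :: instr list) (c :: nat). \<forall>w :: config. reducible_to_one w \<longrightarrow>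
           (\<exists>k \<le> c * length w + c. halted P (run P k (init_state w)) \<and>
                                  solves w (mem (run P k (init_state w))))"
proof (rule exI[of _ solver], rule exI[of _ "3 * length table_entries + 100"], intro allI impI)
  fix w assume "reducible_to_one w"
  then have accepted: "dfa_accepting (foldl dfa_next 0 w)" by (rule reducible_dfa_accepting)
  then obtain w' where w': "apply_hops (to_hops (greedy_hops w)) w = Some w'" "pegs w' = 1"
    using greedy_hops_solve(1) by blast
  from solver_run[OF accepted] obtain k where
    k: "k \<le> 78 + 3 * length table_entries + 76 * length w + 11 * length (greedy_hops w)"
    and run: "halted solver (run solver k (init_state w))"
      "mem (run solver k (init_state w)) 0 = int (length (greedy_hops w))"
      "output_written (mem (run solver k (init_state w))) (greedy_hops w)"
    by blast
  have "k \<le> (3 * length table_entries + 100) * length w + (3 * length table_entries + 100)"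
    using k length_greedy_hops_le[OF w'(1)] by (simp add: algebra_simps)
  moreover have "solves w (mem (run solver k (init_state w)))"
    using solves_if_output_written[OF run(3,2) greedy_hops_solve(2)[OF accepted] w'] .
  ultimately show "\<exists>k \<le> (3 * length table_entries + 100) * length w + (3 * length table_entries + 100).
      halted solver (run solver k (init_state w)) \<and> solves w (mem (run solver k (init_state w)))"
    using run(1) by blast
qed

end
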